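(* For any natural number $n \geq 2$, $\{\omega^2, (\omega^2)^\star\} \leq_c \{\omega^n, (\omega^n)^\star\}$.
   Context: Structures have domains contained in $\omega$. For countable structures $\mathcal{A},\mathcal{B}$, the class $\{\mathcal{A},\mathcal{B}\}$ denotes the class of all structures (with domain $\subseteq\omega$) isomorphic to $\mathcal{A}$ or to $\mathcal{B}$. Linear orders are in the language $\{<\}$; $L^\star$ is the reverse of a linear order $L$; $\omega^n$ denotes ordinal exponentiation (as an order type). An enumeration operator $\Gamma$ is a c.e. set of pairs $(\alpha,\varphi)$ with $\alpha$ a finite set of basic (atomic or negated atomic) sentences of the input language with constants from $\omega$ and $\varphi$ a basic sentence of the output language with constants from $\omega$; $\Gamma(X)=\{\varphi : (\alpha,\varphi)\in\Gamma,\ \alpha\subseteq X\}$. $\Gamma$ is a computable embedding of $\mathcal{K}_0$ into $\mathcal{K}_1$ ($\mathcal{K}_0\leq_c\mathcal{K}_1$) if for every $\mathcal{A}\in\mathcal{K}_0$, $\Gamma$ applied to the atomic diagram of $\mathcal{A}$ is the atomic diagram of a structure $\Gamma(\mathcal{A})\in\mathcal{K}_1$, and for all $\mathcal{A},\mathcal{B}\in\mathcal{K}_0$, $\mathcal{A}\cong\mathcal{B}$ iff $\Gamma(\mathcal{A})\cong\Gamma(\mathcal{B})$. *)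

theory Defs
  imports Main "HOL-Library.Nat_Bijection"
begin

datatype recf =
    Zero
  | Succ
  | Proj nat
  | Comp recf "recf list"
  | PrimRec recf recf
  | Minim recf

inductive eval :: "recf \<Rightarrow> nat list \<Rightarrow> nat \<Rightarrow> bool" where
  eval_Zero: "eval Zero xs 0"
| eval_Succ: "eval Succ (x # xs) (Suc x)"
| eval_Proj: "i < length xs \<Longrightarrow> eval (Proj i) xs (xs ! i)"
| eval_Comp: "list_all2 (\<lambda>g y. eval g xs y) gs ys \<Longrightarrow> eval f ys z \<Longrightarrow> eval (Comp f gs) xs z"
| eval_PrimRec0: "eval f xs z \<Longrightarrow> eval (PrimRec f g) (0 # xs) z"
| eval_PrimRecS: "eval (PrimRec f g) (k # xs) r \<Longrightarrow> eval g (r # k # xs) z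
                   \<Longrightarrow> eval (PrimRec f g) (Suc k # xs) z"
| eval_Minim: "eval f (y # xs) 0 \<Longrightarrow> (\<forall>u<y. \<exists>v. v \<noteq> 0 \<and> eval f (u # xs) v)
                   \<Longrightarrow> eval (Minim f) xs y"

definition ce :: "nat set \<Rightarrow> bool" where
  "ce A \<longleftrightarrow> (\<exists>f. A = {x. \<exists>y. eval f [x] y})"

datatype sent = Eq nat nat | Less nat nat | NEq nat nat | NLess nat nat

definition sent_decode :: "nat \<Rightarrow> sent" where
  "sent_decode n = (let (a, b) = prod_decode (n div 4) in
     if n mod 4 = 0 then Eq a b else if n mod 4 = 1 then Less a b
     else if n mod 4 = 2 then NEq a b else NLess a b)"

type_synonym struc = "nat set \<times> (nat \<times> nat) set"

definition diag :: "struc \<Rightarrow> sent set" where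
  "diag A = (case A of (D, R) \<Rightarrow>
      {Eq a a | a. a \<in> D}
    \<union> {NEq a b | a b. a \<in> D \<and> b \<in> D \<and> a \<noteq> b}
    \<union> {Less a b | a b. a \<in> D \<and> b \<in> D \<and> (a, b) \<in> R}
    \<union> {NLess a b | a b. a \<in> D \<and> b \<in> D \<and> (a, b) \<notin> R})"

definition iso :: "'a set \<times> ('a \<times> 'a) set \<Rightarrow> 'b set \<times> ('b \<times> 'b) set \<Rightarrow> bool" where
  "iso A B \<longleftrightarrow> (\<exists>f. bij_betw f (fst A) (fst B) \<and>
      (\<forall>x\<in>fst A. \<forall>y\<in>fst A. (x, y) \<in> snd A \<longleftrightarrow> (f x, f y) \<in> snd B))"

text \<open>The class {A, B}: all structures with domain \<subseteq> \<omega> isomorphic to A or to B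
  (A, B given as relational structures on some carrier).\<close>
definition cls :: "'a set \<times> ('a \<times> 'a) set \<Rightarrow> 'a set \<times> ('a \<times> 'a) set \<Rightarrow> struc set" where
  "cls A B = {S. iso S A \<or> iso S B}"

definition rev_order :: "'a set \<times> ('a \<times> 'a) set \<Rightarrow> 'a set \<times> ('a \<times> 'a) set" where
  "rev_order L = (fst L, (snd L)\<inverse>)"

text \<open>The order type \<omega>^n (ordinal exponentiation), realised by the recursion
  \<omega>^0 = 1 and \<omega>^(k+1) = \<omega>^k \<cdot> \<omega> (ordinal product: \<omega> copies of \<omega>^k).
  Elements of \<omega>^(k+1) are lists m # xs, with m \<in> \<omega> indexing the copy and xs \<in> \<omega>^k.\<close>
fun omega_pow_rel :: "nat \<Rightarrow> (nat list \<times> nat list) set" where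
  "omega_pow_rel 0 = {}"
| "omega_pow_rel (Suc k) =
     {(m # xs, m' # xs') | m xs m' xs'.
        length xs = k \<and> length xs' = k \<and> (m < m' \<or> (m = m' \<and> (xs, xs') \<in> omega_pow_rel k))}"

definition omega_pow :: "nat \<Rightarrow> nat list set \<times> (nat list \<times> nat list) set" where
  "omega_pow n = ({xs. length xs = n}, omega_pow_rel n)"

definition enum_op :: "(sent set \<times> sent) set \<Rightarrow> bool" where
  "enum_op \<Gamma> \<longleftrightarrow> (\<exists>W. ce W \<and>
     \<Gamma> = {(sent_decode ` set_decode (fst (prod_decode w)), sent_decode (snd (prod_decode w))) | w. w \<in> W})"

definition apply_op :: "(sent set \<times> sent) set \<Rightarrow> sent set \<Rightarrow> sent set" where
  "apply_op \<Gamma> X = {\<phi>. \<exists>\<alpha>. (\<alpha>, \<phi>) \<in> \<Gamma> \<and> \<alpha> \<subseteq> X}"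

definition comp_embedding :: "(sent set \<times> sent) set \<Rightarrow> struc set \<Rightarrow> struc set \<Rightarrow> bool" where
  "comp_embedding \<Gamma> K0 K1 \<longleftrightarrow> enum_op \<Gamma> \<and>
     (\<forall>A\<in>K0. \<exists>B\<in>K1. apply_op \<Gamma> (diag A) = diag B) \<and>
     (\<forall>A\<in>K0. \<forall>B\<in>K0. \<forall>A' B'. apply_op \<Gamma> (diag A) = diag A' \<longrightarrow> apply_op \<Gamma> (diag B) = diag B'
        \<longrightarrow> (iso A B \<longleftrightarrow> iso A' B'))"

definition comp_reducible :: "struc set \<Rightarrow> struc set \<Rightarrow> bool" (infix "\<le>\<^sub>c" 50) where
  "K0 \<le>\<^sub>c K1 \<longleftrightarrow> (\<exists>\<Gamma>. comp_embedding \<Gamma> K0 K1)"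

end

theory Submission
  imports Defs
begin

(*
  For a linear order L with domain contained in \<omega> let T_m(L) consist of the codes of tuples
  (y, x_1, ..., x_m) of elements of L such that all x_i lie in an L-interval [c, d] whose endpoints
  c, d are numerically smaller than y, ordered lexicographically. Whether a number codes such a
  tuple, and how two codes compare, is decided by finitely many atoms of the diagram of L, so T_m is
  induced by an enumeration operator; moreover T_m commutes with reversal.

  If L is isomorphic to \<omega>^2, write its elements as pairs (i, j). The numerical bound on c and d
  bounds the first coordinates of the x_i, which gives an order embedding of T_m(L) into
  \<omega>^(m+2); tuples whose x_i lie in the first copy of \<omega> give an embedding in the other
  direction. Well-orders embedding into each other are isomorphic, so T_m(L) is isomorphic to
  \<omega>^(m+2). As \<omega>^n has a least element and its reverse has none, T_(n-2) maps the two
  classes of \<omega>^2 and (\<omega>^2)* into the two non-isomorphic classes of \<omega>^n and (\<omega>^n)*.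
*)

unbundle cardinal_syntax

section \<open>Mutual embeddings of strict well-orders\<close>

definition strict_linear_on :: "'a set \<Rightarrow> 'a rel \<Rightarrow> bool" where
  "strict_linear_on A r \<longleftrightarrow> (\<forall>x\<in>A. (x, x) \<notin> r) \<and>
     (\<forall>x\<in>A. \<forall>y\<in>A. \<forall>z\<in>A. (x, y) \<in> r \<longrightarrow> (y, z) \<in> r \<longrightarrow> (x, z) \<in> r) \<and>
     (\<forall>x\<in>A. \<forall>y\<in>A. x \<noteq> y \<longrightarrow> (x, y) \<in> r \<or> (y, x) \<in> r)"

lemma strict_linear_onI:
  assumes "\<And>x. x \<in> A \<Longrightarrow> (x, x) \<notin> r"
    and "\<And>x y z. x \<in> A \<Longrightarrow> y \<in> A \<Longrightarrow> z \<in> A \<Longrightarrow> (x, y) \<in> r \<Longrightarrow> (y, z) \<in> r \<Longrightarrow> (x, z) \<in> r"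
    and "\<And>x y. x \<in> A \<Longrightarrow> y \<in> A \<Longrightarrow> x \<noteq> y \<Longrightarrow> (x, y) \<in> r \<or> (y, x) \<in> r"
  shows "strict_linear_on A r"
  unfolding strict_linear_on_def using assms by blast

lemma strict_linear_on_irrefl: "strict_linear_on A r \<Longrightarrow> x \<in> A \<Longrightarrow> (x, x) \<notin> r"
  and strict_linear_on_trans: "strict_linear_on A r \<Longrightarrow> x \<in> A \<Longrightarrow> y \<in> A \<Longrightarrow> z \<in> A \<Longrightarrow>
    (x, y) \<in> r \<Longrightarrow> (y, z) \<in> r \<Longrightarrow> (x, z) \<in> r"
  and strict_linear_on_total: "strict_linear_on A r \<Longrightarrow> x \<in> A \<Longrightarrow> y \<in> A \<Longrightarrow> x \<noteq> y \<Longrightarrow>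
    (x, y) \<notin> r \<Longrightarrow> (y, x) \<in> r"
  unfolding strict_linear_on_def by blast+

lemma strict_linear_on_asym: "strict_linear_on A r \<Longrightarrow> x \<in> A \<Longrightarrow> y \<in> A \<Longrightarrow> (x, y) \<in> r \<Longrightarrow> (y, x) \<notin> r"
  by (metis strict_linear_on_irrefl strict_linear_on_trans)

lemma strict_linear_on_not_less_iff:
  "strict_linear_on A r \<Longrightarrow> x \<in> A \<Longrightarrow> y \<in> A \<Longrightarrow> x \<noteq> y \<and> (x, y) \<notin> r \<longleftrightarrow> (y, x) \<in> r"
  by (metis strict_linear_on_irrefl strict_linear_on_asym strict_linear_on_total)

lemma strict_linear_on_converse: "strict_linear_on A r \<Longrightarrow> strict_linear_on A (r\<inverse>)"
  by (rule strict_linear_onI) (auto dest: strict_linear_on_irrefl strict_linear_on_trans strict_linear_on_total)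

lemma strict_linear_on_pullback:
  assumes lin: "strict_linear_on B s" and inj: "inj_on f A" and into: "f ` A \<subseteq> B"
    and iff: "\<And>x y. x \<in> A \<Longrightarrow> y \<in> A \<Longrightarrow> (x, y) \<in> r \<longleftrightarrow> (f x, f y) \<in> s"
  shows "strict_linear_on A r"
proof (rule strict_linear_onI)
  fix x assume "x \<in> A"
  then show "(x, x) \<notin> r"
    using iff strict_linear_on_irrefl[OF lin] into by blast
next
  fix x y z assume xyz: "x \<in> A" "y \<in> A" "z \<in> A" and "(x, y) \<in> r" "(y, z) \<in> r"
  then have "(f x, f y) \<in> s" "(f y, f z) \<in> s" using iff by blast+
  moreover have "f x \<in> B" "f y \<in> B" "f z \<in> B" using xyz into by auto
  ultimately have "(f x, f z) \<in> s" using strict_linear_on_trans[OF lin] by blast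
  with xyz iff show "(x, z) \<in> r" by blast
next
  fix x y assume xy: "x \<in> A" "y \<in> A" "x \<noteq> y"
  then have "f x \<noteq> f y" using inj by (auto simp: inj_on_def)
  moreover have "f x \<in> B" "f y \<in> B" using xy into by auto
  ultimately have "(f x, f y) \<in> s \<or> (f y, f x) \<in> s"
    using strict_linear_on_total[OF lin] by blast
  with xy iff show "(x, y) \<in> r \<or> (y, x) \<in> r" by blast
qed

lemma strict_linear_on_if_iso:
  assumes "iso A B" and "strict_linear_on (fst B) (snd B)"
  shows "strict_linear_on (fst A) (snd A)"
proof -
  obtain f where "bij_betw f (fst A) (fst B)" and "\<forall>x\<in>fst A. \<forall>y\<in>fst A. (x, y) \<in> snd A \<longleftrightarrow> (f x, f y) \<in> snd B"
    using assms(1) unfolding iso_def by auto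
  then show ?thesis
    by (intro strict_linear_on_pullback[OF assms(2), of f]) (auto simp: bij_betw_def)
qed

definition mono_into :: "'a set \<Rightarrow> 'a rel \<Rightarrow> 'b set \<Rightarrow> 'b rel \<Rightarrow> ('a \<Rightarrow> 'b) \<Rightarrow> bool" where
  "mono_into A r B s f \<longleftrightarrow> f ` A \<subseteq> B \<and> (\<forall>x\<in>A. \<forall>y\<in>A. (x, y) \<in> r \<longrightarrow> (f x, f y) \<in> s)"

definition reflcl_on :: "'a set \<Rightarrow> 'a rel \<Rightarrow> 'a rel" where
  "reflcl_on A r = {(x, y). x \<in> A \<and> y \<in> A \<and> (x = y \<or> (x, y) \<in> r)}"

lemma Field_reflcl_on [simp]: "Field (reflcl_on A r) = A"
  unfolding Field_def reflcl_on_def by auto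

lemma well_order_reflcl_on:
  assumes lin: "strict_linear_on A r" and wf: "wf_on A r"
  shows "Well_order (reflcl_on A r)"
proof -
  have irrefl: "\<forall>x\<in>A. (x, x) \<notin> r"
    and transitive: "\<forall>x\<in>A. \<forall>y\<in>A. \<forall>z\<in>A. (x, y) \<in> r \<longrightarrow> (y, z) \<in> r \<longrightarrow> (x, z) \<in> r"
    and total: "\<forall>x\<in>A. \<forall>y\<in>A. x \<noteq> y \<longrightarrow> (x, y) \<in> r \<or> (y, x) \<in> r"
    using lin unfolding strict_linear_on_def by blast+
  have "linear_order_on A (reflcl_on A r)"
    unfolding order_on_defs
  proof (intro conjI)
    show "reflcl_on A r \<subseteq> A \<times> A" and "refl_on A (reflcl_on A r)"
      unfolding refl_on_def reflcl_on_def by auto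
    show "trans (reflcl_on A r)"
    proof (rule transI)
      fix x y z assume "(x, y) \<in> reflcl_on A r" "(y, z) \<in> reflcl_on A r"
      then show "(x, z) \<in> reflcl_on A r" using transitive unfolding reflcl_on_def by auto
    qed
    show "antisym (reflcl_on A r)"
    proof (rule antisymI)
      fix x y assume "(x, y) \<in> reflcl_on A r" "(y, x) \<in> reflcl_on A r"
      then show "x = y" using irrefl transitive unfolding reflcl_on_def by blast
    qed
    show "total_on A (reflcl_on A r)"
    proof (rule total_onI)
      fix x y assume xy: "x \<in> A" "y \<in> A" "x \<noteq> y"
      then have "(x, y) \<in> r \<or> (y, x) \<in> r" using total by blast
      with xy show "(x, y) \<in> reflcl_on A r \<or> (y, x) \<in> reflcl_on A r"
        unfolding reflcl_on_def by blast
    qed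
  qed
  moreover have "wf (reflcl_on A r - Id)"
    using wf_on_iff_wf[THEN iffD1, OF wf] by (rule wf_subset) (auto simp: reflcl_on_def)
  ultimately show ?thesis
    by (simp add: well_order_on_def)
qed

lemma mono_into_self_not_below:
  assumes wf: "wf_on B s" and k: "mono_into B s B s k" and "b \<in> B"
  shows "(k b, b) \<notin> s"
  using wf \<open>b \<in> B\<close>
proof (induction b rule: wf_on_induct[consumes 2])
  fix b assume b: "b \<in> B" and IH: "\<And>y. y \<in> B \<Longrightarrow> (y, b) \<in> s \<Longrightarrow> (k y, y) \<notin> s"
  have kb: "k b \<in> B" using k b unfolding mono_into_def by blast
  show "(k b, b) \<notin> s"
  proof
    assume "(k b, b) \<in> s"
    moreover from this have "(k (k b), k b) \<in> s" using k b kb unfolding mono_into_def by blast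
    ultimately show False using IH kb by blast
  qed
qed

lemma compat_reflcl_on_strict:
  assumes lin: "strict_linear_on A r" and cmp: "compat (reflcl_on A r) (reflcl_on B s) f"
    and inj: "inj_on f A" and x: "x \<in> A" and y: "y \<in> A" and xy: "(x, y) \<in> r"
  shows "(f x, f y) \<in> s"
proof -
  have "x \<noteq> y" using strict_linear_on_irrefl[OF lin x] xy by blast
  then have "f x \<noteq> f y" using inj_on_contraD[OF inj _ x y] by blast
  moreover have "(x, y) \<in> reflcl_on A r" using x y xy by (simp add: reflcl_on_def)
  then have "(f x, f y) \<in> reflcl_on B s" using cmp unfolding compat_def by blast
  ultimately show ?thesis by (simp add: reflcl_on_def)
qed

lemma embed_reflcl_on_below_missed:
  assumes lin: "strict_linear_on B s" and emb: "embed (reflcl_on A r) (reflcl_on B s) e"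
    and b: "b \<in> B" "b \<notin> e ` A" and x: "x \<in> A"
  shows "(e x, b) \<in> s"
proof (rule ccontr)
  have ex: "e x \<in> B" using embed_in_Field[OF emb] x by simp
  assume "(e x, b) \<notin> s"
  moreover have "e x \<noteq> b" using b x by blast
  ultimately have "(b, e x) \<in> s" using strict_linear_on_total[OF lin ex b(1)] by blast
  then have "b \<in> under (reflcl_on B s) (e x)"
    using b ex by (simp add: under_def reflcl_on_def)
  moreover have "bij_betw e (under (reflcl_on A r) x) (under (reflcl_on B s) (e x))"
    using emb x unfolding embed_def by simp
  ultimately have "b \<in> e ` under (reflcl_on A r) x" unfolding bij_betw_def by blast
  moreover have "under (reflcl_on A r) x \<subseteq> A" by (auto simp: under_def reflcl_on_def)
  ultimately show False using b by blast
qed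

lemma not_ordLess_if_mono_into:
  assumes linA: "strict_linear_on A r" and wfA: "wf_on A r"
    and linB: "strict_linear_on B s" and wfB: "wf_on B s"
    and h: "mono_into B s A r h"
  shows "\<not> reflcl_on A r <o reflcl_on B s"
proof
  assume "reflcl_on A r <o reflcl_on B s"
  then obtain e where emb: "embed (reflcl_on A r) (reflcl_on B s) e" and not_bij: "\<not> bij_betw e A B"
    unfolding ordLess_def embedS_def by auto
  have inj: "inj_on e A"
    using embed_inj_on[OF well_order_reflcl_on[OF linA wfA] emb] by simp
  have eA: "e x \<in> B" if "x \<in> A" for x
    using embed_in_Field[OF emb] that by simp
  obtain b where b: "b \<in> B" "b \<notin> e ` A"
    using not_bij inj eA unfolding bij_betw_def by blast
  have below_b: "(e x, b) \<in> s" if "x \<in> A" for x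
    using embed_reflcl_on_below_missed[OF linB emb b that] .
  have "mono_into B s B s (e \<circ> h)"
    unfolding mono_into_def
  proof (intro conjI ballI impI)
    show "(e \<circ> h) ` B \<subseteq> B" using h eA unfolding mono_into_def by auto
  next
    fix x y assume "x \<in> B" "y \<in> B" "(x, y) \<in> s"
    then have "h x \<in> A" "h y \<in> A" "(h x, h y) \<in> r" using h unfolding mono_into_def by auto
    then show "((e \<circ> h) x, (e \<circ> h) y) \<in> s"
      using compat_reflcl_on_strict[OF linA embed_compat[OF emb] inj] by simp
  qed
  moreover have "((e \<circ> h) b, b) \<in> s" using below_b h b unfolding mono_into_def by auto
  ultimately show False using mono_into_self_not_below[OF wfB _ b(1)] by blast
qed

lemma iso_if_ordIso_witness:
  assumes linA: "strict_linear_on A r" and linB: "strict_linear_on B s"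
    and f: "BNF_Wellorder_Embedding.iso (reflcl_on A r) (reflcl_on B s) f"
  shows "iso (A, r) (B, s)"
proof -
  have bij: "bij_betw f A B" and cmp: "compat (reflcl_on A r) (reflcl_on B s) f"
    using f embed_compat unfolding BNF_Wellorder_Embedding.iso_def by auto
  have fB: "f x \<in> B" if "x \<in> A" for x using bij that by (auto simp: bij_betw_def)
  have inj: "inj_on f A" using bij by (simp add: bij_betw_def)
  have "(x, y) \<in> r \<longleftrightarrow> (f x, f y) \<in> s" if xy: "x \<in> A" "y \<in> A" for x y
  proof
    show "(x, y) \<in> r \<Longrightarrow> (f x, f y) \<in> s" by (rule compat_reflcl_on_strict[OF linA cmp inj xy])
  next
    assume fxy: "(f x, f y) \<in> s"
    then have "x \<noteq> y" using strict_linear_on_irrefl[OF linB fB[OF xy(1)]] by blast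
    moreover have "(y, x) \<notin> r"
    proof
      assume "(y, x) \<in> r"
      then have "(f y, f x) \<in> s" by (rule compat_reflcl_on_strict[OF linA cmp inj xy(2,1)])
      then show False using strict_linear_on_asym[OF linB fB[OF xy(1)] fB[OF xy(2)] fxy] by blast
    qed
    ultimately show "(x, y) \<in> r" using strict_linear_on_total[OF linA xy(2,1)] by blast
  qed
  then show ?thesis unfolding iso_def using bij by auto
qed

theorem iso_if_mono_into_both:
  assumes linA: "strict_linear_on A r" and linB: "strict_linear_on B s" and wfB: "wf_on B s"
    and g: "mono_into A r B s g" and h: "mono_into B s A r h"
  shows "iso (A, r) (B, s)"
proof -
  have wfA: "wf_on A r"
    using g by (intro wf_on_mono_stronger[OF wfB, of g]) (auto simp: mono_into_def)
  have woA: "Well_order (reflcl_on A r)" and woB: "Well_order (reflcl_on B s)"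
    using well_order_reflcl_on linA wfA linB wfB by blast+
  have "reflcl_on A r \<le>o reflcl_on B s"
    using not_ordLess_if_mono_into[OF linB wfB linA wfA g] not_ordLess_iff_ordLeq[OF woA woB] by blast
  moreover have "reflcl_on B s \<le>o reflcl_on A r"
    using not_ordLess_if_mono_into[OF linA wfA linB wfB h] not_ordLess_iff_ordLeq[OF woB woA] by blast
  ultimately have "reflcl_on A r =o reflcl_on B s" using ordIso_iff_ordLeq by blast
  then obtain f where "BNF_Wellorder_Embedding.iso (reflcl_on A r) (reflcl_on B s) f"
    by (auto simp: ordIso_def)
  then show ?thesis using iso_if_ordIso_witness[OF linA linB] by blast
qed

section \<open>Isomorphisms, lexicographic orders and \<omega>^k\<close>

lemma iso_sym: "iso A B \<Longrightarrow> iso B A"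
proof -
  assume "iso A B"
  then obtain f where f: "bij_betw f (fst A) (fst B)"
    and f_iff: "\<forall>x\<in>fst A. \<forall>y\<in>fst A. (x, y) \<in> snd A \<longleftrightarrow> (f x, f y) \<in> snd B"
    unfolding iso_def by blast
  let ?g = "inv_into (fst A) f"
  have g: "bij_betw ?g (fst B) (fst A)" using f by (rule bij_betw_inv_into)
  have "(x, y) \<in> snd B \<longleftrightarrow> (?g x, ?g y) \<in> snd A" if "x \<in> fst B" "y \<in> fst B" for x y
  proof -
    have "?g x \<in> fst A" "?g y \<in> fst A" using g that by (auto simp: bij_betw_def)
    moreover have "f (?g x) = x" "f (?g y) = y" using bij_betw_inv_into_right[OF f] that by auto
    ultimately show ?thesis using f_iff by metis
  qed
  then show ?thesis unfolding iso_def using g by blast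
qed

lemma iso_trans: "iso A B \<Longrightarrow> iso B C \<Longrightarrow> iso A C"
proof -
  assume "iso A B" "iso B C"
  then obtain f g where f: "bij_betw f (fst A) (fst B)"
    and f_iff: "\<forall>x\<in>fst A. \<forall>y\<in>fst A. (x, y) \<in> snd A \<longleftrightarrow> (f x, f y) \<in> snd B"
    and g: "bij_betw g (fst B) (fst C)"
    and g_iff: "\<forall>x\<in>fst B. \<forall>y\<in>fst B. (x, y) \<in> snd B \<longleftrightarrow> (g x, g y) \<in> snd C"
    unfolding iso_def by blast
  have "(x, y) \<in> snd A \<longleftrightarrow> ((g \<circ> f) x, (g \<circ> f) y) \<in> snd C" if "x \<in> fst A" "y \<in> fst A" for x y
  proof -
    have "f x \<in> fst B" "f y \<in> fst B" using f that by (auto simp: bij_betw_def)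
    then show ?thesis using that f_iff g_iff by simp
  qed
  then show ?thesis using bij_betw_trans[OF f g] unfolding iso_def by blast
qed

lemma iso_trans_sym: "iso A B \<Longrightarrow> iso C B \<Longrightarrow> iso A C"
  using iso_trans[OF _ iso_sym] .

lemma rev_order_rev_order [simp]: "rev_order (rev_order A) = A"
  by (simp add: rev_order_def)

lemma iso_rev_order: "iso A B \<Longrightarrow> iso (rev_order A) (rev_order B)"
  unfolding iso_def rev_order_def by auto

lemma iso_rev_order_iff: "iso (rev_order A) B \<longleftrightarrow> iso A (rev_order B)"
  using iso_rev_order rev_order_rev_order by metis

definition has_least :: "'a set \<times> 'a rel \<Rightarrow> bool" where
  "has_least A \<longleftrightarrow> (\<exists>x\<in>fst A. \<forall>y\<in>fst A. y \<noteq> x \<longrightarrow> (x, y) \<in> snd A)"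

lemma iso_has_least: "iso A B \<Longrightarrow> has_least A \<Longrightarrow> has_least B"
proof -
  assume "iso A B" "has_least A"
  then obtain f x where f: "bij_betw f (fst A) (fst B)"
    and f_iff: "\<forall>x\<in>fst A. \<forall>y\<in>fst A. (x, y) \<in> snd A \<longleftrightarrow> (f x, f y) \<in> snd B"
    and x: "x \<in> fst A" "\<forall>y\<in>fst A. y \<noteq> x \<longrightarrow> (x, y) \<in> snd A"
    unfolding iso_def has_least_def by blast
  have "(f x, y) \<in> snd B" if y: "y \<in> fst B" "y \<noteq> f x" for y
  proof -
    obtain z where "z \<in> fst A" "y = f z" using f y(1) by (auto simp: bij_betw_def)
    with x f_iff y(2) show ?thesis by auto
  qed
  moreover have "f x \<in> fst B" using f x by (auto simp: bij_betw_def)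
  ultimately show ?thesis unfolding has_least_def by blast
qed

lemma lexord_irreflexive_on: "\<forall>x\<in>set xs. (x, x) \<notin> r \<Longrightarrow> (xs, xs) \<notin> lexord r"
  using lexord_same_pref_iff[of xs "[]" "[]" r] by simp

lemma lexord_trans_on:
  assumes "strict_linear_on A r" and "set xs \<subseteq> A" "set ys \<subseteq> A" "set zs \<subseteq> A"
    and "(xs, ys) \<in> lexord r" "(ys, zs) \<in> lexord r"
  shows "(xs, zs) \<in> lexord r"
  using assms(2-)
proof (induction xs arbitrary: ys zs)
  case Nil
  then show ?case by (cases zs) auto
next
  case (Cons x xs)
  obtain y ys' where ys: "ys = y # ys'" using Cons.prems(4) by (cases ys) auto
  obtain z zs' where zs: "zs = z # zs'" using Cons.prems(5) by (cases zs) auto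
  show ?case
    using Cons.prems Cons.IH[of ys' zs'] strict_linear_on_trans[OF assms(1), of x y z]
    unfolding ys zs by auto
qed

lemma lexord_total_on:
  assumes "strict_linear_on A r" and "set xs \<subseteq> A" "set ys \<subseteq> A"
    and "length xs = length ys" "xs \<noteq> ys"
  shows "(xs, ys) \<in> lexord r \<or> (ys, xs) \<in> lexord r"
  using assms(2-)
proof (induction xs arbitrary: ys)
  case Nil
  then show ?case by simp
next
  case (Cons x xs)
  obtain y ys' where ys: "ys = y # ys'" using Cons.prems(3) by (cases ys) auto
  show ?case
    using Cons.prems Cons.IH[of ys'] strict_linear_on_total[OF assms(1), of x y]
    unfolding ys by auto
qed

lemma strict_linear_on_lexord:
  assumes lin: "strict_linear_on A r"
  shows "strict_linear_on {xs \<in> lists A. length xs = k} (lexord r)"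
proof (rule strict_linear_onI)
  fix xs assume "xs \<in> {xs \<in> lists A. length xs = k}"
  then have "\<forall>x\<in>set xs. (x, x) \<notin> r" using strict_linear_on_irrefl[OF lin] by (auto simp: lists_eq_set)
  then show "(xs, xs) \<notin> lexord r" by (rule lexord_irreflexive_on)
next
  fix xs ys zs assume "xs \<in> {xs \<in> lists A. length xs = k}" "ys \<in> {xs \<in> lists A. length xs = k}"
    "zs \<in> {xs \<in> lists A. length xs = k}" "(xs, ys) \<in> lexord r" "(ys, zs) \<in> lexord r"
  then show "(xs, zs) \<in> lexord r" by (intro lexord_trans_on[OF lin, of xs ys zs]) (auto simp: lists_eq_set)
next
  fix xs ys assume "xs \<in> {xs \<in> lists A. length xs = k}" "ys \<in> {xs \<in> lists A. length xs = k}"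
    "xs \<noteq> ys"
  then show "(xs, ys) \<in> lexord r \<or> (ys, xs) \<in> lexord r"
    by (intro lexord_total_on[OF lin]) (auto simp: lists_eq_set)
qed

lemma lexord_map:
  assumes "\<And>x y. x \<in> A \<Longrightarrow> y \<in> A \<Longrightarrow> (x, y) \<in> r \<Longrightarrow> (f x, f y) \<in> s"
    and "set xs \<subseteq> A" "set ys \<subseteq> A" "(xs, ys) \<in> lexord r"
  shows "(map f xs, map f ys) \<in> lexord s"
  using assms(2-)
proof (induction xs arbitrary: ys)
  case Nil
  then show ?case by auto
next
  case (Cons x xs)
  then obtain y ys' where "ys = y # ys'" by (cases ys) auto
  with Cons assms(1) show ?case by auto
qed

lemma lexord_converse_iff:
  "length xs = length ys \<Longrightarrow> (xs, ys) \<in> lexord (r\<inverse>) \<longleftrightarrow> (ys, xs) \<in> lexord r"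
proof (induction xs arbitrary: ys)
  case Nil
  then show ?case by simp
next
  case (Cons x xs)
  then show ?case by (cases ys) auto
qed

lemma lexord_iff_nth:
  "length xs = length ys \<Longrightarrow>
    (xs, ys) \<in> lexord r \<longleftrightarrow> (\<exists>l<length xs. (\<forall>i<l. xs ! i = ys ! i) \<and> (xs ! l, ys ! l) \<in> r)"
  by (auto simp: lexord_take_index_conv list_eq_iff_nth_eq)

lemma omega_pow_rel_iff:
  "(xs, ys) \<in> omega_pow_rel k \<longleftrightarrow> length xs = k \<and> length ys = k \<and> (xs, ys) \<in> lexord less_than"
proof (induction k arbitrary: xs ys)
  case 0
  then show ?case by simp
next
  case (Suc k)
  then show ?case by (cases xs; cases ys) auto
qed

lemma strict_linear_omega_pow: "strict_linear_on (fst (omega_pow k)) (snd (omega_pow k))"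
proof (rule strict_linear_on_pullback[where f = id])
  show "strict_linear_on {xs \<in> lists UNIV. length xs = k} (lexord less_than)"
    by (rule strict_linear_on_lexord) (auto simp: strict_linear_on_def)
qed (auto simp: omega_pow_def omega_pow_rel_iff simp del: omega_pow_rel.simps)

lemma wf_omega_pow_rel: "wf (omega_pow_rel k)"
proof (induction k)
  case 0
  then show ?case by simp
next
  case (Suc k)
  have "omega_pow_rel (Suc k) \<subseteq> inv_image (less_than <*lex*> omega_pow_rel k) (\<lambda>xs. (hd xs, tl xs))"
    by auto
  moreover have "wf (inv_image (less_than <*lex*> omega_pow_rel k) (\<lambda>xs. (hd xs, tl xs)))"
    using Suc by (intro wf_inv_image wf_lex_prod wf_less_than)
  ultimately show ?case using wf_subset by blast
qed

lemma wf_on_omega_pow: "wf_on (fst (omega_pow k)) (snd (omega_pow k))"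
  using wf_on_subset[OF wf_omega_pow_rel subset_UNIV] by (simp add: omega_pow_def)

lemma has_least_omega_pow: "has_least (omega_pow k)"
proof -
  have "(replicate k 0, ys) \<in> lexord less_than" if "length ys = k" "ys \<noteq> replicate k 0" for ys
    using that
  proof (induction k arbitrary: ys)
    case 0
    then show ?case by simp
  next
    case (Suc k)
    then obtain a ys' where "ys = a # ys'" by (cases ys) auto
    with Suc show ?case by (cases a) auto
  qed
  then show ?thesis
    unfolding has_least_def omega_pow_def
    by (auto simp: omega_pow_rel_iff simp del: omega_pow_rel.simps intro!: exI[of _ "replicate k 0"])
qed

lemma not_has_least_rev_omega_pow:
  assumes "k \<noteq> 0"
  shows "\<not> has_least (rev_order (omega_pow k))"
proof
  assume "has_least (rev_order (omega_pow k))"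
  then obtain z where z: "length z = k" and greatest: "\<forall>y. length y = k \<longrightarrow> y \<noteq> z \<longrightarrow> (y, z) \<in> omega_pow_rel k"
    unfolding has_least_def rev_order_def omega_pow_def by auto
  obtain a zs where z_eq: "z = a # zs" using z assms by (cases z) auto
  have "(Suc a # zs, z) \<in> omega_pow_rel k" using greatest z z_eq by auto
  moreover have "(z, Suc a # zs) \<in> omega_pow_rel k"
    using z z_eq by (simp add: omega_pow_rel_iff del: omega_pow_rel.simps)
  ultimately show False
    using strict_linear_on_asym[OF strict_linear_omega_pow[of k], of z "Suc a # zs"] z z_eq
    by (simp add: omega_pow_def del: omega_pow_rel.simps)
qed

lemma omega_pow_not_iso_rev: "k \<noteq> 0 \<Longrightarrow> \<not> iso (omega_pow k) (rev_order (omega_pow k))"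
  using iso_has_least has_least_omega_pow not_has_least_rev_omega_pow by blast

section \<open>The tuple order T_m\<close>

fun tuple_decode :: "nat \<Rightarrow> nat \<Rightarrow> nat list" where
  "tuple_decode 0 e = [e]"
| "tuple_decode (Suc k) e = fst (prod_decode e) # tuple_decode k (snd (prod_decode e))"

fun tuple_encode :: "nat list \<Rightarrow> nat" where
  "tuple_encode [] = 0"
| "tuple_encode [x] = x"
| "tuple_encode (x # y # xs) = prod_encode (x, tuple_encode (y # xs))"

lemma length_tuple_decode [simp]: "length (tuple_decode k e) = Suc k"
  by (induction k arbitrary: e) auto

lemma tuple_decode_encode: "length xs = Suc k \<Longrightarrow> tuple_decode k (tuple_encode xs) = xs"
proof (induction k arbitrary: xs)
  case 0
  then show ?case by (cases xs) auto
next
  case (Suc k)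
  then obtain x y ys where "xs = x # y # ys" by (cases xs; cases "tl xs") auto
  with Suc show ?case by auto
qed

lemma tuple_decode_inject: "tuple_decode k e = tuple_decode k e' \<Longrightarrow> e = e'"
proof (induction k arbitrary: e e')
  case 0
  then show ?case by simp
next
  case (Suc k)
  then have "prod_decode e = prod_decode e'" by (simp add: prod_eq_iff)
  then show ?case by (metis prod_decode_inverse)
qed

lemma prod_decode_le: "fst (prod_decode e) \<le> e" "snd (prod_decode e) \<le> e"
  by (metis le_prod_encode_1 prod.collapse prod_decode_inverse)
     (metis le_prod_encode_2 prod.collapse prod_decode_inverse)

lemma tuple_decode_le: "x \<in> set (tuple_decode k e) \<Longrightarrow> x \<le> e"
proof (induction k arbitrary: e)
  case 0
  then show ?case by simp
next
  case (Suc k)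
  then show ?case using prod_decode_le[of e] by (auto dest: Suc.IH)
qed

lemma tuple_decode_nth_le: "i \<le> k \<Longrightarrow> tuple_decode k e ! i \<le> e"
  using tuple_decode_le[of "tuple_decode k e ! i" k e] by (simp add: less_Suc_eq_le)

lemma tuple_decode_hd_tl: "tuple_decode k e = hd (tuple_decode k e) # tl (tuple_decode k e)"
  by (metis length_tuple_decode list.collapse list.size(3) nat.distinct(1))

definition bounded_tuple :: "nat \<Rightarrow> nat set \<Rightarrow> nat rel \<Rightarrow> nat \<Rightarrow> bool" where
  "bounded_tuple m D R e \<longleftrightarrow> set (tuple_decode m e) \<subseteq> D \<and>
     (\<exists>c\<in>D. \<exists>d\<in>D. c < hd (tuple_decode m e) \<and> d < hd (tuple_decode m e) \<and>
        (\<forall>x\<in>set (tl (tuple_decode m e)). (c = x \<or> (c, x) \<in> R) \<and> (x = d \<or> (x, d) \<in> R)))"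

definition tuple_order :: "nat \<Rightarrow> struc \<Rightarrow> struc" where
  "tuple_order m A =
    ({e. bounded_tuple m (fst A) (snd A) e},
     {(e, e'). bounded_tuple m (fst A) (snd A) e \<and> bounded_tuple m (fst A) (snd A) e' \<and>
        (tuple_decode m e, tuple_decode m e') \<in> lexord (snd A)})"

lemma bounded_tuple_converse: "bounded_tuple m D (R\<inverse>) e \<longleftrightarrow> bounded_tuple m D R e"
proof -
  have swap: "bounded_tuple m D R e" if bt: "bounded_tuple m D (R\<inverse>) e" for R
  proof -
    obtain c d where cd: "set (tuple_decode m e) \<subseteq> D" "c \<in> D" "d \<in> D"
      "c < hd (tuple_decode m e)" "d < hd (tuple_decode m e)"
      and between: "\<forall>x\<in>set (tl (tuple_decode m e)). (c = x \<or> (c, x) \<in> R\<inverse>) \<and> (x = d \<or> (x, d) \<in> R\<inverse>)"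
      using bt unfolding bounded_tuple_def by blast
    from between have "\<forall>x\<in>set (tl (tuple_decode m e)). (d = x \<or> (d, x) \<in> R) \<and> (x = c \<or> (x, c) \<in> R)"
      by auto
    with cd show ?thesis unfolding bounded_tuple_def by blast
  qed
  show ?thesis using swap[of R] swap[of "R\<inverse>"] by auto
qed

lemma tuple_order_rev_order: "tuple_order m (rev_order A) = rev_order (tuple_order m A)"
  unfolding tuple_order_def rev_order_def by (auto simp: bounded_tuple_converse lexord_converse_iff)

lemma omega_pow_rel_2_iff:
  "(u, v) \<in> omega_pow_rel 2 \<longleftrightarrow>
    length u = 2 \<and> length v = 2 \<and> (u ! 0 < v ! 0 \<or> u ! 0 = v ! 0 \<and> u ! 1 < v ! 1)"
  by (auto simp: numeral_2_eq_2 length_Suc_conv)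

fun radix_merge :: "nat \<Rightarrow> nat \<Rightarrow> nat list list \<Rightarrow> nat list" where
  "radix_merge b q [] = [q]"
| "radix_merge b q (pq # L) = (q * b + pq ! 0) # radix_merge b (pq ! 1) L"

lemma length_radix_merge [simp]: "length (radix_merge b q L) = Suc (length L)"
  by (induction L arbitrary: q) auto

lemma radix_merge_not_Nil [simp]: "radix_merge b q L \<noteq> []"
  by (cases L) auto

lemma radix_merge_mono:
  assumes "\<forall>pq\<in>set L. pq ! 0 < b" "\<forall>pq\<in>set L'. pq ! 0 < b" "length L = length L'"
    and "q < q' \<or> q = q' \<and> (L, L') \<in> lexord (omega_pow_rel 2)"
  shows "(radix_merge b q L, radix_merge b q' L') \<in> lexord less_than"
  using assms
proof (induction L arbitrary: L' q q')
  case Nil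
  then show ?case by auto
next
  case (Cons pq L)
  obtain pq' L'' where L': "L' = pq' # L''" using Cons.prems(3) by (cases L') auto
  have digits: "pq ! 0 < b" "pq' ! 0 < b" using Cons.prems L' by auto
  consider "q < q'" | "q = q'" "(pq, pq') \<in> omega_pow_rel 2" | "q = q'" "pq = pq'" "(L, L'') \<in> lexord (omega_pow_rel 2)"
    using Cons.prems(4) L' by auto
  then show ?case
  proof cases
    case 1
    have "q * b + pq ! 0 < Suc q * b" using digits by simp
    also have "\<dots> \<le> q' * b" using 1 by (intro mult_le_mono1) simp
    finally show ?thesis using L' by simp
  next
    case 2
    then have "pq ! 0 < pq' ! 0 \<or> pq ! 0 = pq' ! 0 \<and> pq ! 1 < pq' ! 1"
      by (simp add: omega_pow_rel_2_iff)
    then show ?thesis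
      using Cons.IH[of L'' "pq ! 1" "pq' ! 1"] Cons.prems L' 2 by auto
  next
    case 3
    then show ?thesis using Cons.IH[of L'' "pq ! 1" "pq' ! 1"] Cons.prems L' by auto
  qed
qed

lemma lexord_less_than_add_hd:
  "(c, c') \<in> lexord less_than \<Longrightarrow> c \<noteq> [] \<Longrightarrow>
    ((s + hd c) # tl c, (s + hd c') # tl c') \<in> lexord less_than"
  by (cases c; cases c') auto

lemma hd_radix_merge_less: "\<forall>pq\<in>set L. pq ! 0 < b \<Longrightarrow> 0 < b \<Longrightarrow> hd (radix_merge b 0 L) < b"
  by (cases L) auto

locale omega2_coords =
  fixes D :: "nat set" and R :: "nat rel" and f :: "nat \<Rightarrow> nat list"
  assumes f_bij: "bij_betw f D {xs. length xs = 2}"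
    and f_iff: "\<And>x y. x \<in> D \<Longrightarrow> y \<in> D \<Longrightarrow> (x, y) \<in> R \<longleftrightarrow> (f x, f y) \<in> omega_pow_rel 2"
begin

definition row :: "nat \<Rightarrow> nat" where "row x = f x ! 0"
definition col :: "nat \<Rightarrow> nat" where "col x = f x ! 1"
definition elem :: "nat \<Rightarrow> nat \<Rightarrow> nat" where "elem i j = inv_into D f [i, j]"

lemma f_eq: "x \<in> D \<Longrightarrow> f x = [row x, col x]"
proof -
  assume "x \<in> D"
  then have "length (f x) = 2" using f_bij by (auto simp: bij_betw_def)
  then show ?thesis by (auto simp: row_def col_def numeral_2_eq_2 length_Suc_conv)
qed

lemma R_iff: "x \<in> D \<Longrightarrow> y \<in> D \<Longrightarrow> (x, y) \<in> R \<longleftrightarrow> row x < row y \<or> row x = row y \<and> col x < col y"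
  using f_iff[of x y] f_eq[of x] f_eq[of y] by (simp add: omega_pow_rel_2_iff)

lemma elem_in_D: "elem i j \<in> D"
  and f_elem: "f (elem i j) = [i, j]"
proof -
  have "[i, j] \<in> f ` D" using f_bij by (auto simp: bij_betw_def)
  then show "elem i j \<in> D" "f (elem i j) = [i, j]"
    unfolding elem_def by (auto intro: inv_into_into f_inv_into_f)
qed

lemma row_elem [simp]: "row (elem i j) = i" and col_elem [simp]: "col (elem i j) = j"
  using f_elem[of i j] by (auto simp: row_def col_def)

lemma elem_row_col: "x \<in> D \<Longrightarrow> elem (row x) (col x) = x"
  using f_eq f_bij by (metis bij_betw_def elem_def inv_into_f_f)

lemma elem_R_iff: "(elem i j, elem i' j') \<in> R \<longleftrightarrow> i < i' \<or> i = i' \<and> j < j'"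
  using R_iff[OF elem_in_D elem_in_D] by simp

lemma strict_linear_on_D: "strict_linear_on D R"
proof (rule strict_linear_on_pullback[OF strict_linear_omega_pow[of 2]])
  show "inj_on f D" using f_bij by (simp add: bij_betw_def)
qed (use f_bij f_iff in \<open>auto simp: omega_pow_def bij_betw_def\<close>)

definition row_bound :: "nat \<Rightarrow> nat" where
  "row_bound y = Suc (Max (row ` {z \<in> D. z < y}))"

definition col_offset :: "nat \<Rightarrow> nat \<Rightarrow> nat" where
  "col_offset i j = (\<Sum>j'<j. row_bound (elem i j'))"

(* For y = (i, j) and x_k = (p_k, q_k) the image is
   (i, col_offset i j + p_1, q_1 * b + p_2, ..., q_(m-1) * b + p_m, q_m) with b = row_bound y:
   every p_k is below b, so the x-part is read in base b, and cell (i, j) receives its own block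
   of width b in the second coordinate. *)
definition to_omega_pow :: "nat \<Rightarrow> nat \<Rightarrow> nat list" where
  "to_omega_pow m e =
    (let t = tuple_decode m e; y = hd t; c = radix_merge (row_bound y) 0 (map f (tl t))
     in row y # (col_offset (row y) (col y) + hd c) # tl c)"

definition low_code :: nat where "low_code = max (elem 0 0) (elem 1 0)"

definition col_shift :: nat where "col_shift = Max (col ` {z \<in> D. z \<le> low_code})"

(* The entries elem 0 c lie between elem 0 0 and elem 1 0; shifting the column of the head
   beyond col_shift makes its code larger than both endpoints. *)
definition from_omega_pow :: "nat list \<Rightarrow> nat" where
  "from_omega_pow L = tuple_encode (elem (L ! 0) (col_shift + 1 + L ! 1) # map (elem 0) (drop 2 L))"

lemma bounded_tuple_in_D: "bounded_tuple m D R e \<Longrightarrow> set (tuple_decode m e) \<subseteq> D"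
  by (simp add: bounded_tuple_def)

lemma row_less_row_bound:
  assumes e: "bounded_tuple m D R e" and x: "x \<in> set (tl (tuple_decode m e))"
  shows "row x < row_bound (hd (tuple_decode m e))"
proof -
  let ?y = "hd (tuple_decode m e)"
  obtain d where d: "d \<in> D" "d < ?y" and x_d: "x = d \<or> (x, d) \<in> R"
    using assms unfolding bounded_tuple_def by blast
  have "x \<in> D"
    using bounded_tuple_in_D[OF e] x tuple_decode_hd_tl[of m e] by (metis insert_subset list.simps(15) subsetD)
  then have "row x \<le> row d" using x_d R_iff[OF _ d(1)] by auto
  also have "row d \<le> Max (row ` {z \<in> D. z < ?y})" by (rule Max_ge) (use d in auto)
  finally show ?thesis unfolding row_bound_def by simp
qed

lemma col_offset_add_less:
  assumes "y \<in> D" "col y < j" "d < row_bound y"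
  shows "col_offset (row y) (col y) + d < col_offset (row y) j"
proof -
  have "col_offset (row y) (col y) + d < col_offset (row y) (Suc (col y))"
    using assms(3) elem_row_col[OF assms(1)] by (simp add: col_offset_def)
  also have "\<dots> \<le> col_offset (row y) j" unfolding col_offset_def by (rule sum_mono2) (use assms(2) in auto)
  finally show ?thesis .
qed

lemma length_to_omega_pow: "length (to_omega_pow m e) = m + 2"
  by (simp add: to_omega_pow_def Let_def)

lemma to_omega_pow_mono:
  assumes e: "bounded_tuple m D R e" and e': "bounded_tuple m D R e'"
    and less: "(tuple_decode m e, tuple_decode m e') \<in> lexord R"
  shows "(to_omega_pow m e, to_omega_pow m e') \<in> lexord less_than"
proof -
  obtain y xs y' xs' where t: "tuple_decode m e = y # xs" "tuple_decode m e' = y' # xs'"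
    using tuple_decode_hd_tl by metis
  have in_D: "y \<in> D" "set xs \<subseteq> D" "y' \<in> D" "set xs' \<subseteq> D"
    using bounded_tuple_in_D[OF e] bounded_tuple_in_D[OF e'] t by auto
  define c where "c = radix_merge (row_bound y) 0 (map f xs)"
  define c' where "c' = radix_merge (row_bound y') 0 (map f xs')"
  have E: "to_omega_pow m e = row y # (col_offset (row y) (col y) + hd c) # tl c"
    "to_omega_pow m e' = row y' # (col_offset (row y') (col y') + hd c') # tl c'"
    by (simp_all add: to_omega_pow_def Let_def t c_def c'_def)
  have digits: "\<forall>pq\<in>set (map f xs). pq ! 0 < row_bound y"
    and digits': "\<forall>pq\<in>set (map f xs'). pq ! 0 < row_bound y'"
    using row_less_row_bound[OF e] row_less_row_bound[OF e'] t by (auto simp: row_def)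
  from less t consider "(y, y') \<in> R" | "y = y'" "(xs, xs') \<in> lexord R" by auto
  then show ?thesis
  proof cases
    case 1
    then consider "row y < row y'" | "row y = row y'" "col y < col y'" using R_iff in_D by auto
    then show ?thesis
    proof cases
      case 1
      then show ?thesis using E by simp
    next
      case 2
      have "hd c < row_bound y"
        unfolding c_def by (rule hd_radix_merge_less[OF digits]) (simp add: row_bound_def)
      then have "col_offset (row y) (col y) + hd c < col_offset (row y) (col y')"
        by (rule col_offset_add_less[OF in_D(1) 2(2)])
      then show ?thesis using E 2 by simp
    qed
  next
    case 2
    have "(map f xs, map f xs') \<in> lexord (omega_pow_rel 2)"
      by (rule lexord_map[where A = D]) (use f_iff in_D 2 in auto)
    moreover have "length xs = length xs'"
      using t length_tuple_decode[of m e] length_tuple_decode[of m e'] by simp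
    ultimately have "(c, c') \<in> lexord less_than"
      unfolding c_def c'_def using radix_merge_mono digits digits' 2 by simp
    then show ?thesis
      using E 2 lexord_less_than_add_hd[of c c'] by (simp add: c_def)
  qed
qed

lemma col_le_col_shift: "z \<in> D \<Longrightarrow> z \<le> low_code \<Longrightarrow> col z \<le> col_shift"
  unfolding col_shift_def by (rule Max_ge) auto

lemma tuple_decode_from_omega_pow:
  "length L = m + 2 \<Longrightarrow>
    tuple_decode m (from_omega_pow L) = elem (L ! 0) (col_shift + 1 + L ! 1) # map (elem 0) (drop 2 L)"
  unfolding from_omega_pow_def by (rule tuple_decode_encode) simp

lemma bounded_tuple_from_omega_pow:
  assumes "length L = m + 2"
  shows "bounded_tuple m D R (from_omega_pow L)"
proof -
  let ?y = "elem (L ! 0) (col_shift + 1 + L ! 1)"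
  have t: "tuple_decode m (from_omega_pow L) = ?y # map (elem 0) (drop 2 L)"
    using tuple_decode_from_omega_pow[OF assms] .
  have "\<not> ?y \<le> low_code" using col_le_col_shift[OF elem_in_D, of "L ! 0" "col_shift + 1 + L ! 1"] by auto
  then have below: "elem 0 0 < ?y" "elem 1 0 < ?y" unfolding low_code_def by auto
  have "\<forall>x\<in>set (map (elem 0) (drop 2 L)).
      (elem 0 0 = x \<or> (elem 0 0, x) \<in> R) \<and> (x = elem 1 0 \<or> (x, elem 1 0) \<in> R)"
  proof
    fix x assume "x \<in> set (map (elem 0) (drop 2 L))"
    then obtain j where "x = elem 0 j" by auto
    then show "(elem 0 0 = x \<or> (elem 0 0, x) \<in> R) \<and> (x = elem 1 0 \<or> (x, elem 1 0) \<in> R)"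
      using elem_R_iff by (cases j) auto
  qed
  moreover have "set (tuple_decode m (from_omega_pow L)) \<subseteq> D" using t elem_in_D by auto
  ultimately show ?thesis unfolding bounded_tuple_def t
    by (intro conjI bexI[of _ "elem 0 0"] bexI[of _ "elem 1 0"]) (use below elem_in_D in auto)
qed

lemma from_omega_pow_mono:
  assumes L: "length L = m + 2" and L': "length L' = m + 2" and less: "(L, L') \<in> lexord less_than"
  shows "(tuple_decode m (from_omega_pow L), tuple_decode m (from_omega_pow L')) \<in> lexord R"
proof -
  obtain a b cs where L_eq: "L = a # b # cs" using L by (cases L; cases "tl L") auto
  obtain a' b' cs' where L'_eq: "L' = a' # b' # cs'" using L' by (cases L'; cases "tl L'") auto
  have "(map (elem 0) cs, map (elem 0) cs') \<in> lexord R" if "(cs, cs') \<in> lexord less_than"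
    by (rule lexord_map[where A = UNIV]) (use that elem_R_iff in auto)
  then show ?thesis
    using less tuple_decode_from_omega_pow[OF L] tuple_decode_from_omega_pow[OF L']
    unfolding L_eq L'_eq by (auto simp: elem_R_iff)
qed

theorem iso_tuple_order: "iso (tuple_order m (D, R)) (omega_pow (m + 2))"
proof -
  let ?A = "{e. bounded_tuple m D R e}"
  let ?r = "{(e, e'). bounded_tuple m D R e \<and> bounded_tuple m D R e' \<and>
              (tuple_decode m e, tuple_decode m e') \<in> lexord R}"
  have "strict_linear_on ?A ?r"
  proof (rule strict_linear_on_pullback[OF strict_linear_on_lexord[OF strict_linear_on_D]])
    show "inj_on (tuple_decode m) ?A" using tuple_decode_inject by (meson inj_onI)
  qed (auto simp: bounded_tuple_def lists_eq_set)
  moreover have "mono_into ?A ?r {xs. length xs = m + 2} (omega_pow_rel (m + 2)) (to_omega_pow m)"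
    unfolding mono_into_def
    by (auto simp: length_to_omega_pow to_omega_pow_mono omega_pow_rel_iff simp del: omega_pow_rel.simps)
  moreover have "mono_into {xs. length xs = m + 2} (omega_pow_rel (m + 2)) ?A ?r from_omega_pow"
    unfolding mono_into_def
    by (auto simp: bounded_tuple_from_omega_pow from_omega_pow_mono omega_pow_rel_iff simp del: omega_pow_rel.simps)
  ultimately have "iso (?A, ?r) ({xs. length xs = m + 2}, omega_pow_rel (m + 2))"
    using iso_if_mono_into_both strict_linear_omega_pow[of "m + 2"] wf_on_omega_pow[of "m + 2"]
    by (simp add: omega_pow_def)
  then show ?thesis by (simp add: tuple_order_def omega_pow_def)
qed

end

lemma iso_tuple_order_omega_pow:
  assumes "iso A (omega_pow 2)"
  shows "iso (tuple_order m A) (omega_pow (m + 2))"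
proof -
  obtain f where "bij_betw f (fst A) {xs. length xs = 2}"
    and "\<forall>x\<in>fst A. \<forall>y\<in>fst A. (x, y) \<in> snd A \<longleftrightarrow> (f x, f y) \<in> omega_pow_rel 2"
    using assms unfolding iso_def omega_pow_def by auto
  then interpret omega2_coords "fst A" "snd A" f by unfold_locales auto
  show ?thesis using iso_tuple_order[of m] by simp
qed

lemma iso_tuple_order_rev_omega_pow:
  assumes "iso A (rev_order (omega_pow 2))"
  shows "iso (tuple_order m A) (rev_order (omega_pow (m + 2)))"
  using iso_tuple_order_omega_pow[of "rev_order A" m] assms
  by (simp add: iso_rev_order_iff tuple_order_rev_order)

section \<open>An enumeration operator for T_m\<close>

fun sent_encode :: "sent \<Rightarrow> nat" where
  "sent_encode (Eq a b) = 4 * prod_encode (a, b)"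
| "sent_encode (Less a b) = 4 * prod_encode (a, b) + 1"
| "sent_encode (NEq a b) = 4 * prod_encode (a, b) + 2"
| "sent_encode (NLess a b) = 4 * prod_encode (a, b) + 3"

lemma sent_decode_encode [simp]: "sent_decode (sent_encode p) = p"
proof -
  have div_mod: "(4 * k + t) div 4 = k \<and> (4 * k + t) mod 4 = t" if "t < 4" for k t :: nat
    using that by simp
  show ?thesis
  proof (cases p)
    case (Eq a b)
    then show ?thesis using div_mod[where k = "prod_encode (a, b)" and t = 0] by (simp add: sent_decode_def)
  next
    case (Less a b)
    then show ?thesis using div_mod[where k = "prod_encode (a, b)" and t = 1] by (simp add: sent_decode_def)
  next
    case (NEq a b)
    then show ?thesis using div_mod[where k = "prod_encode (a, b)" and t = 2] by (simp add: sent_decode_def)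
  next
    case (NLess a b)
    then show ?thesis using div_mod[where k = "prod_encode (a, b)" and t = 3] by (simp add: sent_decode_def)
  qed
qed

lemma sent_encode_decode [simp]: "sent_encode (sent_decode n) = n"
proof -
  obtain a b where ab: "prod_decode (n div 4) = (a, b)" by fastforce
  have enc: "prod_encode (a, b) = n div 4" using ab by (metis prod_decode_inverse)
  have n: "n = 4 * (n div 4) + n mod 4" by simp
  have "n mod 4 < 4" by simp
  then consider "n mod 4 = 0" | "n mod 4 = 1" | "n mod 4 = 2" | "n mod 4 = 3" by linarith
  then show ?thesis
    by cases (use ab enc n in \<open>simp_all add: sent_decode_def\<close>)
qed

lemma mem_sent_decode_image [simp]: "p \<in> sent_decode ` U \<longleftrightarrow> sent_encode p \<in> U"
  by (metis image_iff sent_decode_encode sent_encode_decode)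

fun sent_bound :: "sent \<Rightarrow> nat" where
  "sent_bound (Eq a b) = max a b"
| "sent_bound (Less a b) = max a b"
| "sent_bound (NEq a b) = max a b"
| "sent_bound (NLess a b) = max a b"

lemma finite_sent_bound: "finite {p. sent_bound p \<le> N}"
proof -
  let ?P = "{..N} \<times> {..N}"
  have "{p. sent_bound p \<le> N} \<subseteq>
      case_prod Eq ` ?P \<union> case_prod Less ` ?P \<union> case_prod NEq ` ?P \<union> case_prod NLess ` ?P"
  proof
    fix p assume "p \<in> {p. sent_bound p \<le> N}"
    then show "p \<in> case_prod Eq ` ?P \<union> case_prod Less ` ?P \<union> case_prod NEq ` ?P \<union> case_prod NLess ` ?P"
      by (cases p) force+
  qed
  then show ?thesis by (rule finite_subset) auto
qed

lemma diag_simps [simp]: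
  "Eq a b \<in> diag (D, R) \<longleftrightarrow> a = b \<and> a \<in> D"
  "NEq a b \<in> diag (D, R) \<longleftrightarrow> a \<in> D \<and> b \<in> D \<and> a \<noteq> b"
  "Less a b \<in> diag (D, R) \<longleftrightarrow> a \<in> D \<and> b \<in> D \<and> (a, b) \<in> R"
  "NLess a b \<in> diag (D, R) \<longleftrightarrow> a \<in> D \<and> b \<in> D \<and> (a, b) \<notin> R"
  by (auto simp: diag_def)

(* The atoms of the diagram of T_m(L) that are witnessed by a set X of atoms of L. The conditions
   are phrased with indices and bounded quantifiers so that the programs below transcribe them
   literally. *)
definition produces_elem :: "nat \<Rightarrow> sent set \<Rightarrow> nat \<Rightarrow> bool" where
  "produces_elem m X e \<longleftrightarrow> (\<forall>i\<le>m. Eq (tuple_decode m e ! i) (tuple_decode m e ! i) \<in> X) \<and>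
     (\<exists>c<tuple_decode m e ! 0. \<exists>d<tuple_decode m e ! 0. Eq c c \<in> X \<and> Eq d d \<in> X \<and>
        (\<forall>i\<le>m. i = 0 \<or> ((c = tuple_decode m e ! i \<or> Less c (tuple_decode m e ! i) \<in> X) \<and>
                         (tuple_decode m e ! i = d \<or> Less (tuple_decode m e ! i) d \<in> X))))"

definition produces_less :: "nat \<Rightarrow> sent set \<Rightarrow> nat \<Rightarrow> nat \<Rightarrow> bool" where
  "produces_less m X a b \<longleftrightarrow>
    (\<exists>l\<le>m. (\<forall>i<l. tuple_decode m a ! i = tuple_decode m b ! i) \<and>
       Less (tuple_decode m a ! l) (tuple_decode m b ! l) \<in> X)"

definition produces_not_less :: "nat \<Rightarrow> sent set \<Rightarrow> nat \<Rightarrow> nat \<Rightarrow> bool" where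
  "produces_not_less m X a b \<longleftrightarrow> a = b \<or>
    (\<exists>l\<le>m. (\<forall>i<l. tuple_decode m a ! i = tuple_decode m b ! i) \<and>
       tuple_decode m a ! l \<noteq> tuple_decode m b ! l \<and> NLess (tuple_decode m a ! l) (tuple_decode m b ! l) \<in> X)"

fun produces :: "nat \<Rightarrow> sent set \<Rightarrow> sent \<Rightarrow> bool" where
  "produces m X (Eq a b) \<longleftrightarrow> a = b \<and> produces_elem m X a"
| "produces m X (NEq a b) \<longleftrightarrow> a \<noteq> b \<and> produces_elem m X a \<and> produces_elem m X b"
| "produces m X (Less a b) \<longleftrightarrow> produces_elem m X a \<and> produces_elem m X b \<and> produces_less m X a b"
| "produces m X (NLess a b) \<longleftrightarrow> produces_elem m X a \<and> produces_elem m X b \<and> produces_not_less m X a b"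

lemma produces_elem_local:
  assumes "produces_elem m X e" and "\<And>p. p \<in> X \<Longrightarrow> sent_bound p \<le> e \<Longrightarrow> p \<in> Y"
  shows "produces_elem m Y e"
proof -
  have le: "tuple_decode m e ! i \<le> e" if "i \<le> m" for i using tuple_decode_nth_le[OF that] .
  from assms(1) obtain c d where cd: "c < tuple_decode m e ! 0" "d < tuple_decode m e ! 0"
    "Eq c c \<in> X" "Eq d d \<in> X"
    "\<forall>i\<le>m. i = 0 \<or> ((c = tuple_decode m e ! i \<or> Less c (tuple_decode m e ! i) \<in> X) \<and>
                      (tuple_decode m e ! i = d \<or> Less (tuple_decode m e ! i) d \<in> X))"
    and diag_X: "\<forall>i\<le>m. Eq (tuple_decode m e ! i) (tuple_decode m e ! i) \<in> X"
    unfolding produces_elem_def by blast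
  have "c \<le> e" "d \<le> e" using cd(1,2) le[of 0] by auto
  then show ?thesis
    unfolding produces_elem_def using cd diag_X le assms(2) by (intro conjI exI[of _ c] exI[of _ d]) auto
qed

lemma produces_local:
  assumes "produces m X q" and "\<And>p. p \<in> X \<Longrightarrow> sent_bound p \<le> sent_bound q \<Longrightarrow> p \<in> Y"
  shows "produces m Y q"
proof (cases q)
  case (Eq a b)
  with assms show ?thesis using produces_elem_local[of m X a Y] by auto
next
  case (NEq a b)
  with assms show ?thesis using produces_elem_local[of m X a Y] produces_elem_local[of m X b Y] by auto
next
  case (Less a b)
  from assms(1) Less obtain l where l: "l \<le> m" "\<forall>i<l. tuple_decode m a ! i = tuple_decode m b ! i"
    "Less (tuple_decode m a ! l) (tuple_decode m b ! l) \<in> X"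
    by (auto simp: produces_less_def)
  have "Less (tuple_decode m a ! l) (tuple_decode m b ! l) \<in> Y"
    by (rule assms(2)[OF l(3)])
      (use Less tuple_decode_nth_le[OF l(1), of a] tuple_decode_nth_le[OF l(1), of b] in auto)
  with l have "produces_less m Y a b" unfolding produces_less_def by blast
  with assms Less show ?thesis using produces_elem_local[of m X a Y] produces_elem_local[of m X b Y] by auto
next
  case (NLess a b)
  have "produces_not_less m Y a b"
  proof (cases "a = b")
    case False
    with assms(1) NLess obtain l where l: "l \<le> m" "\<forall>i<l. tuple_decode m a ! i = tuple_decode m b ! i"
      "tuple_decode m a ! l \<noteq> tuple_decode m b ! l" "NLess (tuple_decode m a ! l) (tuple_decode m b ! l) \<in> X"
      by (auto simp: produces_not_less_def)
    have "NLess (tuple_decode m a ! l) (tuple_decode m b ! l) \<in> Y"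
      by (rule assms(2)[OF l(4)])
        (use NLess tuple_decode_nth_le[OF l(1), of a] tuple_decode_nth_le[OF l(1), of b] in auto)
    with l show ?thesis unfolding produces_not_less_def by blast
  qed (simp add: produces_not_less_def)
  with assms NLess show ?thesis using produces_elem_local[of m X a Y] produces_elem_local[of m X b Y] by auto
qed

lemma ball_set_tl_iff_nth:
  assumes len: "length t = Suc m"
  shows "(\<forall>x\<in>set (tl t). P x) \<longleftrightarrow> (\<forall>i\<le>m. i = 0 \<or> P (t ! i))"
proof (cases t)
  case (Cons h r)
  have "(\<forall>i\<le>m. i = 0 \<or> P (t ! i)) \<longleftrightarrow> (\<forall>j<m. P (r ! j))"
  proof
    assume H: "\<forall>i\<le>m. i = 0 \<or> P (t ! i)"
    show "\<forall>j<m. P (r ! j)"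
    proof (intro allI impI)
      fix j assume "j < m"
      then show "P (r ! j)" using H[rule_format, of "Suc j"] Cons by simp
    qed
  next
    assume H: "\<forall>j<m. P (r ! j)"
    show "\<forall>i\<le>m. i = 0 \<or> P (t ! i)"
    proof (intro allI impI)
      fix i assume "i \<le> m"
      then show "i = 0 \<or> P (t ! i)" using H Cons by (cases i) auto
    qed
  qed
  then show ?thesis using Cons len by (simp add: all_set_conv_all_nth)
qed (use len in simp)

lemma set_subset_iff_nth: "length t = Suc m \<Longrightarrow> set t \<subseteq> D \<longleftrightarrow> (\<forall>i\<le>m. t ! i \<in> D)"
  by (auto simp: in_set_conv_nth less_Suc_eq_le subset_iff)

lemma produces_elem_diag_iff: "produces_elem m (diag (D, R)) e \<longleftrightarrow> bounded_tuple m D R e"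
proof -
  let ?t = "tuple_decode m e"
  have hd: "hd ?t = ?t ! 0" by (subst tuple_decode_hd_tl) simp
  show ?thesis
    unfolding produces_elem_def bounded_tuple_def hd
      ball_set_tl_iff_nth[OF length_tuple_decode] set_subset_iff_nth[OF length_tuple_decode]
    by auto
qed

lemma bounded_tuple_nth_in_D: "bounded_tuple m D R e \<Longrightarrow> i \<le> m \<Longrightarrow> tuple_decode m e ! i \<in> D"
  using set_subset_iff_nth[OF length_tuple_decode, of m e D] by (simp add: bounded_tuple_def)

lemma produces_less_diag_iff:
  assumes "bounded_tuple m D R a" "bounded_tuple m D R b"
  shows "produces_less m (diag (D, R)) a b \<longleftrightarrow> (tuple_decode m a, tuple_decode m b) \<in> lexord R"
proof -
  have "(tuple_decode m a, tuple_decode m b) \<in> lexord R \<longleftrightarrow>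
      (\<exists>l\<le>m. (\<forall>i<l. tuple_decode m a ! i = tuple_decode m b ! i) \<and> (tuple_decode m a ! l, tuple_decode m b ! l) \<in> R)"
    by (simp add: lexord_iff_nth less_Suc_eq_le)
  then show ?thesis
    unfolding produces_less_def using bounded_tuple_nth_in_D[OF assms(1)] bounded_tuple_nth_in_D[OF assms(2)]
    by auto
qed

lemma produces_not_less_diag_iff:
  assumes lin: "strict_linear_on D R" and a: "bounded_tuple m D R a" and b: "bounded_tuple m D R b"
  shows "produces_not_less m (diag (D, R)) a b \<longleftrightarrow> (tuple_decode m a, tuple_decode m b) \<notin> lexord R"
proof -
  let ?ta = "tuple_decode m a" and ?tb = "tuple_decode m b"
  have "?ta ! l \<noteq> ?tb ! l \<and> NLess (?ta ! l) (?tb ! l) \<in> diag (D, R) \<longleftrightarrow> (?tb ! l, ?ta ! l) \<in> R"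
    if "l \<le> m" for l
    using strict_linear_on_not_less_iff[OF lin] bounded_tuple_nth_in_D[OF a that] bounded_tuple_nth_in_D[OF b that]
    by simp
  moreover have "(?tb, ?ta) \<in> lexord R \<longleftrightarrow> (\<exists>l\<le>m. (\<forall>i<l. ?ta ! i = ?tb ! i) \<and> (?tb ! l, ?ta ! l) \<in> R)"
    by (auto simp: lexord_iff_nth less_Suc_eq_le)
  ultimately have "produces_not_less m (diag (D, R)) a b \<longleftrightarrow> a = b \<or> (?tb, ?ta) \<in> lexord R"
    unfolding produces_not_less_def by (metis (no_types, lifting))
  also have "\<dots> \<longleftrightarrow> (?ta, ?tb) \<notin> lexord R"
  proof -
    have lists: "?ta \<in> {xs \<in> lists D. length xs = Suc m}" "?tb \<in> {xs \<in> lists D. length xs = Suc m}"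
      using a b by (auto simp: bounded_tuple_def lists_eq_set)
    note lex = strict_linear_on_lexord[OF lin, of "Suc m"]
    show ?thesis
      using strict_linear_on_irrefl[OF lex lists(1)] strict_linear_on_not_less_iff[OF lex lists]
        tuple_decode_inject[of m a b] by auto
  qed
  finally show ?thesis .
qed

lemma produces_diag_iff:
  assumes "strict_linear_on D R"
  shows "produces m (diag (D, R)) q \<longleftrightarrow> q \<in> diag (tuple_order m (D, R))"
proof -
  have T: "tuple_order m (D, R) = ({e. bounded_tuple m D R e},
      {(e, e'). bounded_tuple m D R e \<and> bounded_tuple m D R e' \<and> (tuple_decode m e, tuple_decode m e') \<in> lexord R})"
    by (simp add: tuple_order_def)
  show ?thesis
    by (cases q) (auto simp: T produces_elem_diag_iff produces_less_diag_iff produces_not_less_diag_iff[OF assms])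
qed

definition tuple_op_codes :: "nat \<Rightarrow> nat set" where
  "tuple_op_codes m =
    {w. produces m (sent_decode ` set_decode (fst (prod_decode w))) (sent_decode (snd (prod_decode w)))}"

definition tuple_op :: "nat \<Rightarrow> (sent set \<times> sent) set" where
  "tuple_op m = {(sent_decode ` set_decode (fst (prod_decode w)), sent_decode (snd (prod_decode w))) | w.
      w \<in> tuple_op_codes m}"

lemma apply_tuple_op: "apply_op (tuple_op m) X = {q. produces m X q}"
proof (intro set_eqI iffI)
  fix q assume "q \<in> apply_op (tuple_op m) X"
  then obtain w where w: "w \<in> tuple_op_codes m" and q: "q = sent_decode (snd (prod_decode w))"
    and sub: "sent_decode ` set_decode (fst (prod_decode w)) \<subseteq> X"
    unfolding apply_op_def tuple_op_def by blast
  have "produces m (sent_decode ` set_decode (fst (prod_decode w))) q"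
    using w q unfolding tuple_op_codes_def by simp
  then have "produces m X q" by (rule produces_local) (use sub in blast)
  then show "q \<in> {q. produces m X q}" by simp
next
  fix q assume "q \<in> {q. produces m X q}"
  \<comment> \<open>by locality, the finitely many atoms of X with constants bounded by those of q suffice\<close>
  define \<alpha> where "\<alpha> = X \<inter> {p. sent_bound p \<le> sent_bound q}"
  define u where "u = set_encode (sent_encode ` \<alpha>)"
  have "finite \<alpha>" unfolding \<alpha>_def using finite_sent_bound by auto
  then have \<alpha>_eq: "sent_decode ` set_decode u = \<alpha>" by (simp add: u_def image_image)
  have "produces m \<alpha> q" by (rule produces_local) (use \<open>q \<in> {q. produces m X q}\<close> \<alpha>_def in auto)
  then have "prod_encode (u, sent_encode q) \<in> tuple_op_codes m" by (simp add: tuple_op_codes_def \<alpha>_eq)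
  then have "(\<alpha>, q) \<in> tuple_op m" unfolding tuple_op_def using \<alpha>_eq by force
  moreover have "\<alpha> \<subseteq> X" unfolding \<alpha>_def by blast
  ultimately show "q \<in> apply_op (tuple_op m) X" unfolding apply_op_def by blast
qed

lemma apply_tuple_op_diag:
  assumes "strict_linear_on (fst A) (snd A)"
  shows "apply_op (tuple_op m) (diag A) = diag (tuple_order m A)"
  using produces_diag_iff[of "fst A" "snd A" m] assms by (simp add: apply_tuple_op)

section \<open>Primitive recursive expressions\<close>

(* Primitive recursive expressions over a list of arguments addressed by position: in
   PRec n b s the recursion runs over the value of n, and s is evaluated on the previous value and
   the counter prepended to the arguments. Truth values are encoded as nonzero numbers. *)
datatype pexp = PArg nat | PZero | PSuc pexp | PRec pexp pexp pexp | PCall pexp "pexp list"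

fun peval :: "pexp \<Rightarrow> nat list \<Rightarrow> nat" where
  "peval (PArg j) xs = xs ! j"
| "peval PZero xs = 0"
| "peval (PSuc a) xs = Suc (peval a xs)"
| "peval (PRec n b s) xs = rec_nat (peval b xs) (\<lambda>i r. peval s (r # i # xs)) (peval n xs)"
| "peval (PCall f as) xs = peval f (map (\<lambda>a. peval a xs) as)"

fun pexp_wf :: "nat \<Rightarrow> pexp \<Rightarrow> bool" where
  "pexp_wf k (PArg j) \<longleftrightarrow> j < k"
| "pexp_wf k PZero \<longleftrightarrow> True"
| "pexp_wf k (PSuc a) \<longleftrightarrow> pexp_wf k a"
| "pexp_wf k (PRec n b s) \<longleftrightarrow> pexp_wf k n \<and> pexp_wf k b \<and> pexp_wf (k + 2) s"
| "pexp_wf k (PCall f as) \<longleftrightarrow> pexp_wf (length as) f \<and> (\<forall>a\<in>set as. pexp_wf k a)"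

fun compile :: "nat \<Rightarrow> pexp \<Rightarrow> recf" where
  "compile k (PArg j) = Proj j"
| "compile k PZero = Zero"
| "compile k (PSuc a) = Comp Succ [compile k a]"
| "compile k (PRec n b s) = Comp (PrimRec (compile k b) (compile (k + 2) s)) (compile k n # map Proj [0..<k])"
| "compile k (PCall f as) = Comp (compile (length as) f) (map (compile k) as)"

lemma eval_PrimRec_rec_nat:
  assumes "eval f xs z" and "\<And>r i. eval g (r # i # xs) (h i r)"
  shows "eval (PrimRec f g) (v # xs) (rec_nat z h v)"
proof (induction v)
  case 0
  then show ?case using assms(1) by (auto intro: eval_PrimRec0)
next
  case (Suc v)
  then show ?case using assms(2) by (auto intro: eval_PrimRecS)
qed

lemma list_all2_eval_Proj: "list_all2 (\<lambda>g y. eval g xs y) (map Proj [0..<length xs]) xs"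
  by (auto simp: list_all2_conv_all_nth intro: eval_Proj)

lemma compile_correct: "pexp_wf k e \<Longrightarrow> length xs = k \<Longrightarrow> eval (compile k e) xs (peval e xs)"
proof (induction e arbitrary: k xs)
  case (PArg j)
  then show ?case by (auto intro: eval_Proj)
next
  case PZero
  then show ?case by (auto intro: eval_Zero)
next
  case (PSuc a)
  then have "eval (compile k a) xs (peval a xs)" by auto
  then show ?case by (auto intro!: eval_Comp[where ys = "[peval a xs]"] eval_Succ)
next
  case (PRec n b s)
  have "eval (compile k n) xs (peval n xs)" using PRec by auto
  then have "list_all2 (\<lambda>g y. eval g xs y) (compile k n # map Proj [0..<k]) (peval n xs # xs)"
    using list_all2_eval_Proj[of xs] PRec.prems by auto
  moreover have "eval (PrimRec (compile k b) (compile (k + 2) s)) (peval n xs # xs) (peval (PRec n b s) xs)"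
    using eval_PrimRec_rec_nat PRec by simp
  ultimately show ?case by (auto intro: eval_Comp)
next
  case (PCall f as)
  have "list_all2 (\<lambda>g y. eval g xs y) (map (compile k) as) (map (\<lambda>a. peval a xs) as)"
    using PCall by (auto simp: list_all2_conv_all_nth)
  moreover have "eval (compile (length as) f) (map (\<lambda>a. peval a xs) as) (peval f (map (\<lambda>a. peval a xs) as))"
    using PCall by auto
  ultimately show ?case by (auto intro: eval_Comp)
qed

inductive_cases eval_ZeroE: "eval Zero xs z"
inductive_cases eval_SuccE: "eval Succ xs z"
inductive_cases eval_ProjE: "eval (Proj i) xs z"
inductive_cases eval_CompE: "eval (Comp f gs) xs z"
inductive_cases eval_PrimRecE: "eval (PrimRec f g) xs z"
inductive_cases eval_MinimE: "eval (Minim f) xs z"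

lemma eval_deterministic: "eval f xs y \<Longrightarrow> eval f xs z \<Longrightarrow> y = z"
proof (induction arbitrary: z rule: eval.induct)
  case (eval_Zero xs)
  then show ?case by (blast elim: eval_ZeroE)
next
  case (eval_Succ x xs)
  then show ?case by (blast elim: eval_SuccE)
next
  case (eval_Proj i xs)
  then show ?case by (blast elim: eval_ProjE)
next
  case (eval_Comp xs gs ys f z')
  from eval_Comp.prems obtain ys' where args: "list_all2 (\<lambda>g y. eval g xs y) gs ys'" and "eval f ys' z"
    by (blast elim: eval_CompE)
  have "ys = ys'" using eval_Comp.IH(1) args
  proof (induction gs arbitrary: ys ys')
    case Nil
    then show ?case by auto
  next
    case (Cons g gs)
    then obtain y ys0 y' ys0' where "ys = y # ys0" "ys' = y' # ys0'" by (auto simp: list_all2_Cons1)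
    with Cons show ?case by auto
  qed
  with \<open>eval f ys' z\<close> eval_Comp.IH(2) show ?case by auto
next
  case (eval_PrimRec0 f xs z' g)
  then show ?case by (blast elim: eval_PrimRecE)
next
  case (eval_PrimRecS f g k xs r z')
  from eval_PrimRecS.prems obtain r' where "eval (PrimRec f g) (k # xs) r'" "eval g (r' # k # xs) z"
    by (blast elim: eval_PrimRecE)
  with eval_PrimRecS.IH show ?case by auto
next
  case (eval_Minim f y xs)
  from eval_Minim.prems have "eval f (z # xs) 0" "\<forall>u<z. \<exists>v. v \<noteq> 0 \<and> eval f (u # xs) v"
    by (blast elim: eval_MinimE)+
  with eval_Minim.IH show ?case by (metis linorder_neqE_nat)
qed

definition holds :: "pexp \<Rightarrow> nat list \<Rightarrow> bool" where
  "holds e xs \<longleftrightarrow> peval e xs \<noteq> 0"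

definition psub :: "pexp \<Rightarrow> pexp \<Rightarrow> pexp" where
  "psub a b = PCall (PRec (PArg 1) (PArg 0) (PCall (PRec (PArg 0) PZero (PArg 1)) [PArg 0])) [a, b]"

definition pnot :: "pexp \<Rightarrow> pexp" where
  "pnot a = psub (PSuc PZero) a"

lemma peval_psub [simp]: "peval (psub a b) xs = peval a xs - peval b xs"
proof -
  have "rec_nat x (\<lambda>i r. rec_nat 0 (\<lambda>i r. i) r) y = x - y" for x y :: nat
  proof -
    have pred: "rec_nat 0 (\<lambda>i r. i) r = r - 1" for r :: nat by (cases r) auto
    show ?thesis by (induction y) (simp_all add: pred)
  qed
  then show ?thesis by (simp add: psub_def)
qed

lemma holds_pnot [simp]: "holds (pnot a) xs \<longleftrightarrow> \<not> holds a xs"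
  by (auto simp: pnot_def holds_def)

lemma pexp_wf_psub [simp]: "pexp_wf k (psub a b) \<longleftrightarrow> pexp_wf k a \<and> pexp_wf k b"
  and pexp_wf_pnot [simp]: "pexp_wf k (pnot a) \<longleftrightarrow> pexp_wf k a"
  by (auto simp: psub_def pnot_def)

theorem ce_exists_holds:
  assumes "pexp_wf 2 p"
  shows "ce {x. \<exists>y. holds p [y, x]}"
proof -
  let ?g = "compile 2 (pnot p)"
  have g: "eval ?g [y, x] (peval (pnot p) [y, x])" for y x
    by (rule compile_correct) (use assms in auto)
  have "{x. \<exists>y. holds p [y, x]} = {x. \<exists>y. eval (Minim ?g) [x] y}"
  proof (intro set_eqI iffI; simp)
    fix x assume "\<exists>y. holds p [y, x]"
    then obtain y where y: "holds p [y, x]" and least: "\<And>u. u < y \<Longrightarrow> \<not> holds p [u, x]"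
      using exists_least_iff[of "\<lambda>y. holds p [y, x]"] by blast
    have "eval ?g [y, x] 0" using g[of y x] y by (simp add: holds_def pnot_def)
    moreover have "\<exists>v. v \<noteq> 0 \<and> eval ?g [u, x] v" if "u < y" for u
      using g[of u x] least[OF that] by (intro exI[of _ 1]) (simp add: holds_def pnot_def)
    ultimately show "\<exists>y. eval (Minim ?g) [x] y" by (blast intro: eval_Minim)
  next
    fix x assume "\<exists>y. eval (Minim ?g) [x] y"
    then obtain y where "eval ?g [y, x] 0" by (blast elim: eval_MinimE)
    then have "peval (pnot p) [y, x] = 0" using g[of y x] eval_deterministic by blast
    then have "holds p [y, x]" by (simp add: holds_def pnot_def)
    then show "\<exists>y. holds p [y, x]" by blast
  qed
  then show ?thesis unfolding ce_def by blast
qed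

definition padd :: "pexp \<Rightarrow> pexp \<Rightarrow> pexp" where
  "padd a b = PCall (PRec (PArg 0) (PArg 1) (PSuc (PArg 0))) [a, b]"

definition pmul :: "pexp \<Rightarrow> pexp \<Rightarrow> pexp" where
  "pmul a b = PCall (PRec (PArg 0) PZero (padd (PArg 0) (PArg 3))) [a, b]"

fun pconst :: "nat \<Rightarrow> pexp" where
  "pconst 0 = PZero"
| "pconst (Suc n) = PSuc (pconst n)"

definition psg :: "pexp \<Rightarrow> pexp" where
  "psg a = pnot (pnot a)"

definition pless :: "pexp \<Rightarrow> pexp \<Rightarrow> pexp" where
  "pless a b = psg (psub b a)"

definition peq :: "pexp \<Rightarrow> pexp \<Rightarrow> pexp" where
  "peq a b = pnot (padd (psub a b) (psub b a))"

definition pand :: "pexp \<Rightarrow> pexp \<Rightarrow> pexp" where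
  "pand a b = pmul (psg a) (psg b)"

definition por :: "pexp \<Rightarrow> pexp \<Rightarrow> pexp" where
  "por a b = psg (padd a b)"

definition psum :: "nat \<Rightarrow> pexp \<Rightarrow> pexp \<Rightarrow> pexp" where
  "psum k n body = PRec n PZero (padd (PArg 0) (PCall body (map PArg [1..<k + 2])))"

definition pex :: "nat \<Rightarrow> pexp \<Rightarrow> pexp \<Rightarrow> pexp" where
  "pex k n body = psg (psum k n (psg body))"

definition pall :: "nat \<Rightarrow> pexp \<Rightarrow> pexp \<Rightarrow> pexp" where
  "pall k n body = pnot (pex k n (pnot body))"

definition ppair :: "pexp \<Rightarrow> pexp \<Rightarrow> pexp" where
  "ppair a b = padd (PCall (PRec (PArg 0) PZero (padd (PArg 0) (PSuc (PArg 1)))) [padd a b]) a"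

definition ppow2 :: "pexp \<Rightarrow> pexp" where
  "ppow2 a = PCall (PRec (PArg 0) (PSuc PZero) (padd (PArg 0) (PArg 0))) [a]"

lemma peval_padd [simp]: "peval (padd a b) xs = peval a xs + peval b xs"
proof -
  have "rec_nat y (\<lambda>i r. Suc r) x = x + y" for x y :: nat by (induction x) auto
  then show ?thesis by (simp add: padd_def)
qed

lemma peval_pmul [simp]: "peval (pmul a b) xs = peval a xs * peval b xs"
proof -
  have "rec_nat 0 (\<lambda>i r. r + y) x = x * y" for x y :: nat by (induction x) auto
  then show ?thesis by (simp add: pmul_def)
qed

lemma peval_pconst [simp]: "peval (pconst c) xs = c"
  by (induction c) auto

lemma peval_psg [simp]: "peval (psg a) xs = (if holds a xs then 1 else 0)"
  by (simp add: psg_def pnot_def holds_def)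

lemma peval_pless [simp]: "peval (pless a b) xs = (if peval a xs < peval b xs then 1 else 0)"
  by (simp add: pless_def holds_def)

lemma peval_ppair [simp]: "peval (ppair a b) xs = prod_encode (peval a xs, peval b xs)"
proof -
  have "rec_nat 0 (\<lambda>i r. r + Suc i) n = triangle n" for n by (induction n) auto
  then show ?thesis by (simp add: ppair_def prod_encode_def)
qed

lemma peval_ppow2 [simp]: "peval (ppow2 a) xs = 2 ^ peval a xs"
proof -
  have "rec_nat (Suc 0) (\<lambda>i r. r + r) n = 2 ^ n" for n by (induction n) auto
  then show ?thesis by (simp add: ppow2_def)
qed

lemma peval_psum [simp]:
  assumes "length xs = k"
  shows "peval (psum k n body) xs = (\<Sum>i<peval n xs. peval body (i # xs))"
proof -
  have args: "map (\<lambda>a. peval a (r # i # xs)) (map PArg [1..<k + 2]) = i # xs" for r i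
  proof -
    have "[1..<k + 2] = map Suc [0..<length (i # xs)]" using assms by (simp add: map_Suc_upt)
    then show ?thesis by (intro nth_equalityI) (simp_all del: upt_Suc)
  qed
  have "rec_nat 0 (\<lambda>i r. r + f i) m = (\<Sum>i<m. f i)" for f :: "nat \<Rightarrow> nat" and m by (induction m) auto
  then show ?thesis using args by (simp add: psum_def del: upt_Suc)
qed

lemma holds_simps [simp]:
  "holds (psg a) xs \<longleftrightarrow> holds a xs"
  "holds (pless a b) xs \<longleftrightarrow> peval a xs < peval b xs"
  "holds (peq a b) xs \<longleftrightarrow> peval a xs = peval b xs"
  "holds (pand a b) xs \<longleftrightarrow> holds a xs \<and> holds b xs"
  "holds (por a b) xs \<longleftrightarrow> holds a xs \<or> holds b xs"
  "holds (PCall f as) xs \<longleftrightarrow> holds f (map (\<lambda>a. peval a xs) as)"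
  by (auto simp: holds_def psg_def pless_def peq_def pand_def por_def pnot_def)

lemma holds_pex [simp]:
  "length xs = k \<Longrightarrow> holds (pex k n body) xs \<longleftrightarrow> (\<exists>i<peval n xs. holds body (i # xs))"
  by (auto simp: pex_def holds_def)

lemma peval_pex [simp]:
  "length xs = k \<Longrightarrow> peval (pex k n body) xs = (if \<exists>i<peval n xs. holds body (i # xs) then 1 else 0)"
  using holds_pex[of xs k n body] by (simp add: pex_def)

lemma holds_pall [simp]:
  "length xs = k \<Longrightarrow> holds (pall k n body) xs \<longleftrightarrow> (\<forall>i<peval n xs. holds body (i # xs))"
  by (simp add: pall_def)

lemma pexp_wf_simps [simp]:
  "pexp_wf k (padd a b) \<longleftrightarrow> pexp_wf k a \<and> pexp_wf k b"
  "pexp_wf k (pmul a b) \<longleftrightarrow> pexp_wf k a \<and> pexp_wf k b"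
  "pexp_wf k (pconst c)"
  "pexp_wf k (psg a) \<longleftrightarrow> pexp_wf k a"
  "pexp_wf k (pless a b) \<longleftrightarrow> pexp_wf k a \<and> pexp_wf k b"
  "pexp_wf k (peq a b) \<longleftrightarrow> pexp_wf k a \<and> pexp_wf k b"
  "pexp_wf k (pand a b) \<longleftrightarrow> pexp_wf k a \<and> pexp_wf k b"
  "pexp_wf k (por a b) \<longleftrightarrow> pexp_wf k a \<and> pexp_wf k b"
  "pexp_wf k (ppair a b) \<longleftrightarrow> pexp_wf k a \<and> pexp_wf k b"
  "pexp_wf k (ppow2 a) \<longleftrightarrow> pexp_wf k a"
  by (induction c) (auto simp: padd_def pmul_def psg_def pless_def peq_def pand_def por_def ppair_def ppow2_def)

lemma pexp_wf_quantifiers [simp]: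
  "k' = k \<Longrightarrow> pexp_wf k (psum k' n body) \<longleftrightarrow> pexp_wf k n \<and> pexp_wf (Suc k) body"
  "k' = k \<Longrightarrow> pexp_wf k (pex k' n body) \<longleftrightarrow> pexp_wf k n \<and> pexp_wf (Suc k) body"
  "k' = k \<Longrightarrow> pexp_wf k (pall k' n body) \<longleftrightarrow> pexp_wf k n \<and> pexp_wf (Suc k) body"
  by (auto simp: psum_def pex_def pall_def simp del: upt_Suc)

lemma mem_set_decode_iff:
  "s \<in> set_decode u \<longleftrightarrow> (\<exists>q<Suc u. \<exists>r<2 ^ s. u = q * 2 ^ Suc s + 2 ^ s + r)"
proof
  assume "s \<in> set_decode u"
  then obtain q where q: "u div 2 ^ s = 2 * q + 1" by (auto simp: set_decode_def elim: oddE)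
  have "u = (u div 2 ^ s) * 2 ^ s + u mod 2 ^ s" by (rule div_mult_mod_eq[symmetric])
  then have "u = q * 2 ^ Suc s + 2 ^ s + u mod 2 ^ s" using q by (simp add: algebra_simps)
  moreover have "q < Suc u" using q div_le_dividend[of u "2 ^ s"] by linarith
  ultimately show "\<exists>q<Suc u. \<exists>r<2 ^ s. u = q * 2 ^ Suc s + 2 ^ s + r" by force
next
  assume "\<exists>q<Suc u. \<exists>r<2 ^ s. u = q * 2 ^ Suc s + 2 ^ s + r"
  then obtain q r where r: "r < 2 ^ s" and u: "u = r + (2 * q + 1) * 2 ^ s"
    by (auto simp: algebra_simps)
  then have "u div 2 ^ s = 2 * q + 1 + r div 2 ^ s"
    using div_mult_self1[of "2 ^ s :: nat" r "2 * q + 1"] by simp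
  then have "u div 2 ^ s = 2 * q + 1" using r by simp
  then show "s \<in> set_decode u" by (simp add: set_decode_def)
qed

definition member_prog :: pexp where
  "member_prog = pex 2 (PSuc (PArg 0)) (pex 3 (ppow2 (PArg 2))
     (peq (PArg 2) (padd (padd (pmul (PArg 1) (ppow2 (PSuc (PArg 3)))) (ppow2 (PArg 3))) (PArg 0))))"

lemma holds_member_prog [simp]: "holds member_prog [u, s] \<longleftrightarrow> s \<in> set_decode u"
  unfolding member_prog_def mem_set_decode_iff by (simp add: algebra_simps)

definition fst_prog :: pexp where
  "fst_prog = psum 1 (PSuc (PArg 0)) (pmul (PArg 0) (pex 2 (PSuc (PArg 1)) (peq (ppair (PArg 1) (PArg 0)) (PArg 2))))"

definition snd_prog :: pexp where
  "snd_prog = psum 1 (PSuc (PArg 0)) (pmul (PArg 0) (pex 2 (PSuc (PArg 1)) (peq (ppair (PArg 0) (PArg 1)) (PArg 2))))"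

lemma sum_indicator_eq: "c < n \<Longrightarrow> (\<Sum>b<n. b * (if b = c then 1 else 0)) = (c :: nat)"
  by (simp add: if_distrib sum.delta' cong: if_cong)

lemma peval_fst_prog [simp]: "peval fst_prog [x] = fst (prod_decode x)"
proof -
  have "(\<exists>b<Suc x. prod_encode (a, b) = x) \<longleftrightarrow> a = fst (prod_decode x)" for a
    using prod_decode_le(2)[of x] by (metis fst_conv less_Suc_eq_le prod.collapse prod_decode_inverse prod_encode_inverse)
  then have "peval fst_prog [x] = (\<Sum>a<Suc x. a * (if a = fst (prod_decode x) then 1 else 0))"
    unfolding fst_prog_def by (simp del: sum.lessThan_Suc)
  also have "\<dots> = fst (prod_decode x)" using prod_decode_le(1)[of x] by (intro sum_indicator_eq) simp
  finally show ?thesis .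
qed

lemma peval_snd_prog [simp]: "peval snd_prog [x] = snd (prod_decode x)"
proof -
  have "(\<exists>a<Suc x. prod_encode (a, b) = x) \<longleftrightarrow> b = snd (prod_decode x)" for b
    using prod_decode_le(1)[of x] by (metis snd_conv less_Suc_eq_le prod.collapse prod_decode_inverse prod_encode_inverse)
  then have "peval snd_prog [x] = (\<Sum>b<Suc x. b * (if b = snd (prod_decode x) then 1 else 0))"
    unfolding snd_prog_def by (simp del: sum.lessThan_Suc)
  also have "\<dots> = snd (prod_decode x)" using prod_decode_le(2)[of x] by (intro sum_indicator_eq) simp
  finally show ?thesis .
qed

definition iter_snd_prog :: pexp where
  "iter_snd_prog = PRec (PArg 0) (PArg 1) (PCall snd_prog [PArg 0])"

definition component_prog :: "nat \<Rightarrow> pexp" where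
  "component_prog m =
    padd (pmul (pless (PArg 0) (pconst m)) (PCall fst_prog [PCall iter_snd_prog [PArg 0, PArg 1]]))
         (pmul (pnot (pless (PArg 0) (pconst m))) (PCall iter_snd_prog [PArg 0, PArg 1]))"

lemma peval_iter_snd_prog [simp]: "peval iter_snd_prog [i, e] = ((\<lambda>x. snd (prod_decode x)) ^^ i) e"
proof -
  have "rec_nat e (\<lambda>i r. snd (prod_decode r)) n = ((\<lambda>x. snd (prod_decode x)) ^^ n) e" for n
    by (induction n) auto
  then show ?thesis by (simp add: iter_snd_prog_def)
qed

lemma tuple_decode_nth_funpow:
  "i \<le> m \<Longrightarrow> tuple_decode m e ! i =
    (if i < m then fst (prod_decode (((\<lambda>x. snd (prod_decode x)) ^^ i) e))
     else ((\<lambda>x. snd (prod_decode x)) ^^ i) e)"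
proof (induction m arbitrary: i e)
  case 0
  then show ?case by simp
next
  case (Suc m)
  then show ?case by (cases i) (simp_all add: funpow_Suc_right del: funpow.simps)
qed

lemma peval_component_prog [simp]: "i \<le> m \<Longrightarrow> peval (component_prog m) [i, e] = tuple_decode m e ! i"
  unfolding component_prog_def using tuple_decode_nth_funpow[of i m e] by (auto simp: holds_def pnot_def)

definition pnth :: "nat \<Rightarrow> pexp \<Rightarrow> pexp \<Rightarrow> pexp" where
  "pnth m i e = PCall (component_prog m) [i, e]"

definition pmem :: "pexp \<Rightarrow> pexp \<Rightarrow> pexp" where
  "pmem u s = PCall member_prog [u, s]"

definition pcode_eq :: "pexp \<Rightarrow> pexp \<Rightarrow> pexp" where
  "pcode_eq x y = pmul (pconst 4) (ppair x y)"

definition pcode_less :: "pexp \<Rightarrow> pexp \<Rightarrow> pexp" where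
  "pcode_less x y = padd (pmul (pconst 4) (ppair x y)) (pconst 1)"

definition pcode_not_less :: "pexp \<Rightarrow> pexp \<Rightarrow> pexp" where
  "pcode_not_less x y = padd (pmul (pconst 4) (ppair x y)) (pconst 3)"

lemma peval_pnth [simp]: "peval i xs \<le> m \<Longrightarrow> peval (pnth m i e) xs = tuple_decode m (peval e xs) ! peval i xs"
  by (simp add: pnth_def)

lemma holds_pmem [simp]: "holds (pmem u s) xs \<longleftrightarrow> peval s xs \<in> set_decode (peval u xs)"
  by (simp add: pmem_def)

lemma peval_pcode [simp]:
  "peval (pcode_eq x y) xs = sent_encode (Eq (peval x xs) (peval y xs))"
  "peval (pcode_less x y) xs = sent_encode (Less (peval x xs) (peval y xs))"
  "peval (pcode_not_less x y) xs = sent_encode (NLess (peval x xs) (peval y xs))"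
  by (simp_all add: pcode_eq_def pcode_less_def pcode_not_less_def)

definition elem_prog :: "nat \<Rightarrow> pexp" where
  "elem_prog m = pand (pall 2 (PSuc (pconst m)) (pmem (PArg 1) (pcode_eq (pnth m (PArg 0) (PArg 2)) (pnth m (PArg 0) (PArg 2)))))
   (pex 2 (pnth m (pconst 0) (PArg 1)) (pex 3 (pnth m (pconst 0) (PArg 2))
     (pand (pmem (PArg 2) (pcode_eq (PArg 1) (PArg 1))) (pand (pmem (PArg 2) (pcode_eq (PArg 0) (PArg 0)))
       (pall 4 (PSuc (pconst m)) (por (peq (PArg 0) (pconst 0))
          (pand (por (peq (PArg 2) (pnth m (PArg 0) (PArg 4))) (pmem (PArg 3) (pcode_less (PArg 2) (pnth m (PArg 0) (PArg 4)))))
                (por (peq (pnth m (PArg 0) (PArg 4)) (PArg 1)) (pmem (PArg 3) (pcode_less (pnth m (PArg 0) (PArg 4)) (PArg 1)))))))))))"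

definition less_prog :: "nat \<Rightarrow> pexp" where
  "less_prog m = pex 3 (PSuc (pconst m)) (pand (pall 4 (PArg 0) (peq (pnth m (PArg 0) (PArg 3)) (pnth m (PArg 0) (PArg 4))))
   (pmem (PArg 1) (pcode_less (pnth m (PArg 0) (PArg 2)) (pnth m (PArg 0) (PArg 3)))))"

definition not_less_prog :: "nat \<Rightarrow> pexp" where
  "not_less_prog m = por (peq (PArg 1) (PArg 2)) (pex 3 (PSuc (pconst m))
   (pand (pall 4 (PArg 0) (peq (pnth m (PArg 0) (PArg 3)) (pnth m (PArg 0) (PArg 4))))
     (pand (pnot (peq (pnth m (PArg 0) (PArg 2)) (pnth m (PArg 0) (PArg 3))))
       (pmem (PArg 1) (pcode_not_less (pnth m (PArg 0) (PArg 2)) (pnth m (PArg 0) (PArg 3)))))))"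

lemma holds_elem_prog [simp]:
  "holds (elem_prog m) [u, e] \<longleftrightarrow> produces_elem m (sent_decode ` set_decode u) e"
  unfolding elem_prog_def produces_elem_def by (simp add: less_Suc_eq_le)

lemma holds_less_prog [simp]:
  "holds (less_prog m) [u, a, b] \<longleftrightarrow> produces_less m (sent_decode ` set_decode u) a b"
  unfolding less_prog_def produces_less_def by (auto simp: less_Suc_eq_le)

lemma holds_not_less_prog [simp]:
  "holds (not_less_prog m) [u, a, b] \<longleftrightarrow> produces_not_less m (sent_decode ` set_decode u) a b"
  unfolding not_less_prog_def produces_not_less_def by (auto simp: less_Suc_eq_le)

definition produces_prog :: "nat \<Rightarrow> pexp" where
  "produces_prog m = pex 2 (PSuc (PArg 1)) (pex 3 (PSuc (PArg 0)) (pex 4 (PSuc (PArg 1))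
  (pand (peq (PArg 2) (ppair (PArg 1) (PArg 0)))
    (por (por (pand (peq (PArg 4) (pcode_eq (PArg 1) (PArg 0)))
                (pand (peq (PArg 1) (PArg 0)) (PCall (elem_prog m) [PArg 3, PArg 1])))
              (pand (peq (PArg 4) (pcode_less (PArg 1) (PArg 0)))
                 (pand (PCall (elem_prog m) [PArg 3, PArg 1])
                   (pand (PCall (elem_prog m) [PArg 3, PArg 0]) (PCall (less_prog m) [PArg 3, PArg 1, PArg 0])))))
         (por (pand (peq (PArg 4) (padd (pcode_eq (PArg 1) (PArg 0)) (pconst 2)))
                 (pand (pnot (peq (PArg 1) (PArg 0)))
                   (pand (PCall (elem_prog m) [PArg 3, PArg 1]) (PCall (elem_prog m) [PArg 3, PArg 0]))))
              (pand (peq (PArg 4) (pcode_not_less (PArg 1) (PArg 0)))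
                 (pand (PCall (elem_prog m) [PArg 3, PArg 1])
                   (pand (PCall (elem_prog m) [PArg 3, PArg 0]) (PCall (not_less_prog m) [PArg 3, PArg 1, PArg 0])))))))))"

lemma holds_produces_prog:
  "holds (produces_prog m) [u, v] \<longleftrightarrow> produces m (sent_decode ` set_decode u) (sent_decode v)"
proof -
  let ?X = "sent_decode ` set_decode u"
  have "holds (produces_prog m) [u, v] \<longleftrightarrow>
      (\<exists>p<Suc v. \<exists>a<Suc p. \<exists>b<Suc p. p = prod_encode (a, b) \<and>
        (v = sent_encode (Eq a b) \<and> produces m ?X (Eq a b) \<or>
         v = sent_encode (Less a b) \<and> produces m ?X (Less a b) \<or>
         v = sent_encode (NEq a b) \<and> produces m ?X (NEq a b) \<or>
         v = sent_encode (NLess a b) \<and> produces m ?X (NLess a b)))"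
    unfolding produces_prog_def by auto
  also have "\<dots> \<longleftrightarrow> (\<exists>q. v = sent_encode q \<and> produces m ?X q)"
  proof
    assume "\<exists>q. v = sent_encode q \<and> produces m ?X q"
    then obtain q where q: "v = sent_encode q" "produces m ?X q" by blast
    obtain a b where "q \<in> {Eq a b, Less a b, NEq a b, NLess a b}" by (cases q) auto
    moreover have "prod_encode (a, b) < Suc v" "a < Suc (prod_encode (a, b))" "b < Suc (prod_encode (a, b))"
      using q(1) le_prod_encode_1[of a b] le_prod_encode_2[of b a] calculation by auto
    ultimately show "\<exists>p<Suc v. \<exists>a<Suc p. \<exists>b<Suc p. p = prod_encode (a, b) \<and>
        (v = sent_encode (Eq a b) \<and> produces m ?X (Eq a b) \<or>
         v = sent_encode (Less a b) \<and> produces m ?X (Less a b) \<or>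
         v = sent_encode (NEq a b) \<and> produces m ?X (NEq a b) \<or>
         v = sent_encode (NLess a b) \<and> produces m ?X (NLess a b))"
      using q by blast
  qed blast
  also have "\<dots> \<longleftrightarrow> produces m ?X (sent_decode v)"
    by (metis sent_decode_encode sent_encode_decode)
  finally show ?thesis .
qed

(* The first argument is ignored: it is the search variable of the unbounded minimisation in
   ce_exists_holds, which is trivial here since tuple_op_codes is decidable. *)
definition codes_prog :: "nat \<Rightarrow> pexp" where
  "codes_prog m = pex 2 (PSuc (PArg 1)) (pex 3 (PSuc (PArg 2))
     (pand (peq (PArg 3) (ppair (PArg 1) (PArg 0))) (PCall (produces_prog m) [PArg 1, PArg 0])))"

lemma holds_codes_prog: "holds (codes_prog m) [y, w] \<longleftrightarrow> w \<in> tuple_op_codes m"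
proof -
  have "holds (codes_prog m) [y, w] \<longleftrightarrow> (\<exists>u<Suc w. \<exists>v<Suc w. w = prod_encode (u, v) \<and>
      produces m (sent_decode ` set_decode u) (sent_decode v))"
    unfolding codes_prog_def by (simp add: holds_produces_prog)
  also have "\<dots> \<longleftrightarrow> w \<in> tuple_op_codes m"
  proof -
    obtain u v where uv: "prod_decode w = (u, v)" by fastforce
    then have "w = prod_encode (u, v)" "u < Suc w" "v < Suc w"
      using prod_decode_le[of w] by (auto simp: less_Suc_eq_le dest: arg_cong[where f = prod_encode])
    then show ?thesis unfolding tuple_op_codes_def using uv by auto
  qed
  finally show ?thesis .
qed

lemma pexp_wf_programs [simp]:
  "pexp_wf 2 member_prog" "pexp_wf 1 fst_prog" "pexp_wf 1 snd_prog" "pexp_wf 2 iter_snd_prog"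
  "pexp_wf 2 (component_prog m)" "pexp_wf 2 (elem_prog m)" "pexp_wf 3 (less_prog m)"
  "pexp_wf 3 (not_less_prog m)" "pexp_wf 2 (produces_prog m)" "pexp_wf 2 (codes_prog m)"
  by (simp_all add: member_prog_def fst_prog_def snd_prog_def iter_snd_prog_def component_prog_def
      elem_prog_def less_prog_def not_less_prog_def produces_prog_def codes_prog_def
      pnth_def pmem_def pcode_eq_def pcode_less_def pcode_not_less_def)

lemma enum_op_tuple_op: "enum_op (tuple_op m)"
proof -
  have "tuple_op_codes m = {w. \<exists>y. holds (codes_prog m) [y, w]}"
    using holds_codes_prog by auto
  then have "ce (tuple_op_codes m)" using ce_exists_holds[of "codes_prog m"] by simp
  then show ?thesis unfolding enum_op_def tuple_op_def by blast
qed

section \<open>Computable embeddings of two-element classes\<close>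

lemma iso_if_diag_eq: "diag A = diag B \<Longrightarrow> iso A B"
proof -
  assume eq: "diag A = diag B"
  obtain D R D' R' where A: "A = (D, R)" and B: "B = (D', R')" by fastforce
  have "D = D'" using eq diag_simps(1) unfolding A B by blast
  moreover have "(x, y) \<in> R \<longleftrightarrow> (x, y) \<in> R'" if "x \<in> D" "y \<in> D" for x y
    using eq that \<open>D = D'\<close> diag_simps(3)[of x y D R] diag_simps(3)[of x y D' R'] unfolding A B by blast
  ultimately show ?thesis unfolding iso_def A B by (auto intro: exI[of _ id])
qed

lemma strict_linear_on_cls_omega_pow:
  assumes "A \<in> cls (omega_pow k) (rev_order (omega_pow k))"
  shows "strict_linear_on (fst A) (snd A)"
proof -
  have rev: "strict_linear_on (fst (rev_order (omega_pow k))) (snd (rev_order (omega_pow k)))"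
    using strict_linear_on_converse[OF strict_linear_omega_pow] by (simp add: rev_order_def)
  from assms consider "iso A (omega_pow k)" | "iso A (rev_order (omega_pow k))" by (auto simp: cls_def)
  then show ?thesis
  proof cases
    case 1
    then show ?thesis using strict_linear_on_if_iso strict_linear_omega_pow by blast
  next
    case 2
    then show ?thesis using strict_linear_on_if_iso rev by blast
  qed
qed

lemma iso_iff_same_side:
  assumes X: "iso X U \<or> iso X V" and Y: "iso Y U \<or> iso Y V" and UV: "\<not> iso U V"
  shows "iso X Y \<longleftrightarrow> (iso X U \<longleftrightarrow> iso Y U)"
proof
  assume XY: "iso X Y"
  show "iso X U \<longleftrightarrow> iso Y U"
  proof
    assume "iso X U"
    then show "iso Y U" using iso_trans[OF iso_sym[OF XY]] by blast
  next
    assume "iso Y U"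
    then show "iso X U" using iso_trans[OF XY] by blast
  qed
next
  assume "iso X U \<longleftrightarrow> iso Y U"
  moreover have "\<not> (iso Z U \<and> iso Z V)" for Z :: "'a set \<times> 'a rel"
    using UV iso_trans[OF iso_sym] by blast
  ultimately have "iso X U \<and> iso Y U \<or> iso X V \<and> iso Y V" using X Y by blast
  then show "iso X Y" by (elim disjE conjE) (erule (1) iso_trans_sym)+
qed

theorem comp_embedding_cls:
  fixes U V :: "'a set \<times> 'a rel" and U' V' :: "'b set \<times> 'b rel" and T :: "struc \<Rightarrow> struc"
  assumes UV: "\<not> iso U V" and UV': "\<not> iso U' V'"
    and op: "enum_op \<Gamma>"
    and diag: "\<And>A. A \<in> cls U V \<Longrightarrow> apply_op \<Gamma> (diag A) = diag (T A)"
    and T_U: "\<And>A. iso A U \<Longrightarrow> iso (T A) U'"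
    and T_V: "\<And>A. iso A V \<Longrightarrow> iso (T A) V'"
  shows "comp_embedding \<Gamma> (cls U V) (cls U' V')"
proof -
  have image: "(iso A' U' \<or> iso A' V') \<and> (iso A' U' \<longleftrightarrow> iso A U)"
    if A: "A \<in> cls U V" and A': "apply_op \<Gamma> (diag A) = diag A'" for A A'
  proof -
    have A'_T: "iso A' (T A)" using iso_if_diag_eq diag[OF A] A' by metis
    show ?thesis
    proof (cases "iso A U")
      case True
      then show ?thesis using iso_trans[OF A'_T T_U] by blast
    next
      case False
      then have "iso A' V'" using A iso_trans[OF A'_T T_V] by (auto simp: cls_def)
      moreover have "\<not> iso A' U'" using calculation UV' iso_trans[OF iso_sym] by blast
      ultimately show ?thesis using False by blast
    qed
  qed
  have "\<exists>B\<in>cls U' V'. apply_op \<Gamma> (diag A) = diag B" if "A \<in> cls U V" for A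
    using image[OF that diag[OF that]] diag[OF that] unfolding cls_def by blast
  moreover have "iso A B \<longleftrightarrow> iso A' B'"
    if "A \<in> cls U V" "B \<in> cls U V" "apply_op \<Gamma> (diag A) = diag A'" "apply_op \<Gamma> (diag B) = diag B'"
    for A B A' B'
  proof -
    have "iso A B \<longleftrightarrow> (iso A U \<longleftrightarrow> iso B U)"
      using iso_iff_same_side[OF _ _ UV] that(1,2) by (simp add: cls_def)
    also have "\<dots> \<longleftrightarrow> (iso A' U' \<longleftrightarrow> iso B' U')" using image[OF that(1,3)] image[OF that(2,4)] by blast
    also have "\<dots> \<longleftrightarrow> iso A' B'"
      using iso_iff_same_side[OF _ _ UV'] image[OF that(1,3)] image[OF that(2,4)] by blast
    finally show ?thesis .
  qed
  ultimately show ?thesis unfolding comp_embedding_def using op by blast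
qed

theorem corollary6p4:
  fixes n :: nat
  assumes "n \<ge> 2"
  shows "cls (omega_pow 2) (rev_order (omega_pow 2)) \<le>\<^sub>c cls (omega_pow n) (rev_order (omega_pow n))"
proof -
  let ?m = "n - 2"
  have n: "?m + 2 = n" using assms by simp
  have "comp_embedding (tuple_op ?m)
      (cls (omega_pow 2) (rev_order (omega_pow 2))) (cls (omega_pow n) (rev_order (omega_pow n)))"
  proof (rule comp_embedding_cls)
    show "\<not> iso (omega_pow 2) (rev_order (omega_pow 2))"
      and "\<not> iso (omega_pow n) (rev_order (omega_pow n))"
      using assms by (simp_all add: omega_pow_not_iso_rev)
    show "enum_op (tuple_op ?m)" by (rule enum_op_tuple_op)
    show "apply_op (tuple_op ?m) (diag A) = diag (tuple_order ?m A)"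
      if "A \<in> cls (omega_pow 2) (rev_order (omega_pow 2))" for A
      using apply_tuple_op_diag strict_linear_on_cls_omega_pow[OF that] by blast
    show "iso (tuple_order ?m A) (omega_pow n)" if "iso A (omega_pow 2)" for A
      using iso_tuple_order_omega_pow[OF that, of ?m] n by simp
    show "iso (tuple_order ?m A) (rev_order (omega_pow n))" if "iso A (rev_order (omega_pow 2))" for A
      using iso_tuple_order_rev_omega_pow[OF that, of ?m] n by simp
  qed
  then show ?thesis unfolding comp_reducible_def by blast
qed

end
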